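(* (i) Let $S$ be a unital nonassociative ring with multiplication $\circ$ which has an associative subring $D$ that is a division algebra, such that $S$ is a free left $D$-module of rank $m$. Suppose that: (1) there is $t\in S$ such that $t^i$, $0\le i<m$, is a basis of $S$ over $D$, where $t^0=1$ and $t^{i+1}=t\circ t^i$; (2) for all $a\in D$, $a\ne0$, there is $a'\in D$, $a'\neq0$, such that $t\circ a=a'\circ t$; (3) for all $a,b,c\in D$, $i+j<m$, $k<m$, we have $[a\circ t^i,b\circ t^j,c\circ t^k]=0$; (4) $t^m=d$ with $d\in D$; (5) the map $\sigma:D\to D$, $\sigma(a)=a'$ (with $\sigma(0)=0$), has order $m$ and fixed set $\{a\in D\mid t\circ a=a\circ t\}$, $D$ is a central simple algebra over its center $F$, and $F_0=F\cap\mathrm{Fix}(\sigma)$ contains a primitive $m$th root of unity $\omega$. Then $S\cong S_f=(D,\sigma,d)$ with $f(t)=t^m-d\in D[t;\sigma]$. (ii) If moreover $S$ is a right division ring and $D$ is a central simple algebra, then $f$ is irreducible and $S$ is a nonassociative cyclic extension of $D$ of degree $m$.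
   Context: $[x,y,z]=(x\circ y)\circ z-x\circ(y\circ z)$ is the associator. $D[t;\sigma]$ is the twisted polynomial ring (polynomials $\sum a_it^i$, $a_i\in D$, multiplication determined by $ta=\sigma(a)t$); $(D,\sigma,d)=S_f$ is the set of polynomials of degree $<m$ with multiplication $g\circ h=$ remainder of $gh$ on right division by $f=t^m-d$. A nonassociative ring $S\ne0$ is a right division ring if right multiplication $x\mapsto x\circ a$ is bijective for every $a\neq0$. $f$ is irreducible if not a unit and not a product of two non-units. Definition: if $A$ is a nonassociative division algebra and $D\subseteq A$ an associative division subalgebra, $A$ is a nonassociative cyclic extension of $D$ of degree $m$ if $A$ is a free left $D$-module of rank $m$ and $\mathrm{Aut}(A)$ has a cyclic subgroup $G$ of order $m$ with $H|_D=\mathrm{id}_D$ for all $H\in G$. *)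

theory Defs
  imports "HOL-Algebra.Ring"
begin

definition nonassoc_ring :: "('a, 'b) ring_scheme \<Rightarrow> bool" where
  "nonassoc_ring R \<longleftrightarrow> abelian_group R \<and>
     (\<forall>x\<in>carrier R. \<forall>y\<in>carrier R. x \<otimes>\<^bsub>R\<^esub> y \<in> carrier R) \<and>
     \<one>\<^bsub>R\<^esub> \<in> carrier R \<and>
     (\<forall>x\<in>carrier R. \<one>\<^bsub>R\<^esub> \<otimes>\<^bsub>R\<^esub> x = x \<and> x \<otimes>\<^bsub>R\<^esub> \<one>\<^bsub>R\<^esub> = x) \<and>
     (\<forall>x\<in>carrier R. \<forall>y\<in>carrier R. \<forall>z\<in>carrier R.
        (x \<oplus>\<^bsub>R\<^esub> y) \<otimes>\<^bsub>R\<^esub> z = (x \<otimes>\<^bsub>R\<^esub> z) \<oplus>\<^bsub>R\<^esub> (y \<otimes>\<^bsub>R\<^esub> z) \<and>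
        z \<otimes>\<^bsub>R\<^esub> (x \<oplus>\<^bsub>R\<^esub> y) = (z \<otimes>\<^bsub>R\<^esub> x) \<oplus>\<^bsub>R\<^esub> (z \<otimes>\<^bsub>R\<^esub> y))"

definition associator :: "('a, 'b) ring_scheme \<Rightarrow> 'a \<Rightarrow> 'a \<Rightarrow> 'a \<Rightarrow> 'a" where
  "associator R x y z = ((x \<otimes>\<^bsub>R\<^esub> y) \<otimes>\<^bsub>R\<^esub> z) \<ominus>\<^bsub>R\<^esub> (x \<otimes>\<^bsub>R\<^esub> (y \<otimes>\<^bsub>R\<^esub> z))"

primrec npow :: "('a, 'b) ring_scheme \<Rightarrow> 'a \<Rightarrow> nat \<Rightarrow> 'a" where
  "npow R t 0 = \<one>\<^bsub>R\<^esub>"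
| "npow R t (Suc i) = t \<otimes>\<^bsub>R\<^esub> npow R t i"

definition assoc_division_subring :: "('a, 'b) ring_scheme \<Rightarrow> 'a set \<Rightarrow> bool" where
  "assoc_division_subring R D \<longleftrightarrow> D \<subseteq> carrier R \<and> \<zero>\<^bsub>R\<^esub> \<in> D \<and> \<one>\<^bsub>R\<^esub> \<in> D \<and>
     \<one>\<^bsub>R\<^esub> \<noteq> \<zero>\<^bsub>R\<^esub> \<and>
     (\<forall>a\<in>D. \<forall>b\<in>D. a \<oplus>\<^bsub>R\<^esub> b \<in> D \<and> a \<otimes>\<^bsub>R\<^esub> b \<in> D) \<and>
     (\<forall>a\<in>D. \<ominus>\<^bsub>R\<^esub> a \<in> D) \<and>
     (\<forall>a\<in>D. \<forall>b\<in>D. \<forall>c\<in>D. (a \<otimes>\<^bsub>R\<^esub> b) \<otimes>\<^bsub>R\<^esub> c = a \<otimes>\<^bsub>R\<^esub> (b \<otimes>\<^bsub>R\<^esub> c)) \<and>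
     (\<forall>a\<in>D. a \<noteq> \<zero>\<^bsub>R\<^esub> \<longrightarrow> (\<exists>b\<in>D. a \<otimes>\<^bsub>R\<^esub> b = \<one>\<^bsub>R\<^esub> \<and> b \<otimes>\<^bsub>R\<^esub> a = \<one>\<^bsub>R\<^esub>))"

definition center_of :: "('a, 'b) ring_scheme \<Rightarrow> 'a set \<Rightarrow> 'a set" where
  "center_of R D = {z \<in> D. \<forall>x\<in>D. z \<otimes>\<^bsub>R\<^esub> x = x \<otimes>\<^bsub>R\<^esub> z}"

definition two_sided_ideal :: "('a, 'b) ring_scheme \<Rightarrow> 'a set \<Rightarrow> 'a set \<Rightarrow> bool" where
  "two_sided_ideal R D I \<longleftrightarrow> I \<subseteq> D \<and> \<zero>\<^bsub>R\<^esub> \<in> I \<and>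
     (\<forall>x\<in>I. \<forall>y\<in>I. x \<oplus>\<^bsub>R\<^esub> y \<in> I) \<and> (\<forall>x\<in>I. \<ominus>\<^bsub>R\<^esub> x \<in> I) \<and>
     (\<forall>a\<in>D. \<forall>x\<in>I. a \<otimes>\<^bsub>R\<^esub> x \<in> I \<and> x \<otimes>\<^bsub>R\<^esub> a \<in> I)"

definition central_simple :: "('a, 'b) ring_scheme \<Rightarrow> 'a set \<Rightarrow> bool" where
  "central_simple R D \<longleftrightarrow>
     (\<forall>I. two_sided_ideal R D I \<longrightarrow> I = {\<zero>\<^bsub>R\<^esub>} \<or> I = D) \<and> D \<noteq> {\<zero>\<^bsub>R\<^esub>} \<and>
     (\<exists>B. finite B \<and> B \<subseteq> D \<and>
        (\<forall>x\<in>D. \<exists>c. (\<forall>b\<in>B. c b \<in> center_of R D) \<and>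
                    x = (\<Oplus>\<^bsub>R\<^esub> b\<in>B. c b \<otimes>\<^bsub>R\<^esub> b)))"

definition left_basis :: "('a, 'b) ring_scheme \<Rightarrow> 'a set \<Rightarrow> (nat \<Rightarrow> 'a) \<Rightarrow> nat \<Rightarrow> bool" where
  "left_basis R D b m \<longleftrightarrow> (\<forall>i<m. b i \<in> carrier R) \<and>
     (\<forall>x\<in>carrier R. \<exists>!c. c \<in> {..<m} \<rightarrow>\<^sub>E D \<and> x = (\<Oplus>\<^bsub>R\<^esub> i\<in>{..<m}. c i \<otimes>\<^bsub>R\<^esub> b i))"

definition free_left_module :: "('a, 'b) ring_scheme \<Rightarrow> 'a set \<Rightarrow> nat \<Rightarrow> bool" where
  "free_left_module R D m \<longleftrightarrow>
     (\<forall>a\<in>D. \<forall>b\<in>D. \<forall>x\<in>carrier R. (a \<otimes>\<^bsub>R\<^esub> b) \<otimes>\<^bsub>R\<^esub> x = a \<otimes>\<^bsub>R\<^esub> (b \<otimes>\<^bsub>R\<^esub> x)) \<and>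
     (\<exists>b. left_basis R D b m)"

definition right_division_ring :: "('a, 'b) ring_scheme \<Rightarrow> bool" where
  "right_division_ring R \<longleftrightarrow> carrier R \<noteq> {\<zero>\<^bsub>R\<^esub>} \<and>
     (\<forall>a\<in>carrier R. a \<noteq> \<zero>\<^bsub>R\<^esub> \<longrightarrow> bij_betw (\<lambda>x. x \<otimes>\<^bsub>R\<^esub> a) (carrier R) (carrier R))"

definition nonassoc_division_ring :: "('a, 'b) ring_scheme \<Rightarrow> bool" where
  "nonassoc_division_ring R \<longleftrightarrow> nonassoc_ring R \<and> carrier R \<noteq> {\<zero>\<^bsub>R\<^esub>} \<and>
     (\<forall>a\<in>carrier R. a \<noteq> \<zero>\<^bsub>R\<^esub> \<longrightarrow>
        bij_betw (\<lambda>x. x \<otimes>\<^bsub>R\<^esub> a) (carrier R) (carrier R) \<and>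
        bij_betw (\<lambda>x. a \<otimes>\<^bsub>R\<^esub> x) (carrier R) (carrier R))"

definition na_iso :: "('a, 'b) ring_scheme \<Rightarrow> ('c, 'd) ring_scheme \<Rightarrow> ('a \<Rightarrow> 'c) \<Rightarrow> bool" where
  "na_iso R S \<phi> \<longleftrightarrow> bij_betw \<phi> (carrier R) (carrier S) \<and> \<phi> \<one>\<^bsub>R\<^esub> = \<one>\<^bsub>S\<^esub> \<and>
     (\<forall>x\<in>carrier R. \<forall>y\<in>carrier R.
        \<phi> (x \<oplus>\<^bsub>R\<^esub> y) = \<phi> x \<oplus>\<^bsub>S\<^esub> \<phi> y \<and> \<phi> (x \<otimes>\<^bsub>R\<^esub> y) = \<phi> x \<otimes>\<^bsub>S\<^esub> \<phi> y)"

definition na_aut :: "('a, 'b) ring_scheme \<Rightarrow> ('a \<Rightarrow> 'a) set" where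
  "na_aut R = {h. h \<in> extensional (carrier R) \<and> na_iso R R h}"

definition nonassoc_cyclic_ext :: "('a, 'b) ring_scheme \<Rightarrow> 'a set \<Rightarrow> nat \<Rightarrow> bool" where
  "nonassoc_cyclic_ext R D m \<longleftrightarrow>
     nonassoc_division_ring R \<and> assoc_division_subring R D \<and> free_left_module R D m \<and>
     (\<exists>G. G \<subseteq> na_aut R \<and> finite G \<and> card G = m \<and>
        (\<exists>g\<in>G. G = {restrict (g ^^ k) (carrier R) | k. True}) \<and>
        (\<forall>H\<in>G. \<forall>a\<in>D. H a = a))"

definition tpolys :: "('a, 'b) ring_scheme \<Rightarrow> 'a set \<Rightarrow> (nat \<Rightarrow> 'a) set" where
  "tpolys R D = {p. (\<forall>i. p i \<in> D) \<and> finite {i. p i \<noteq> \<zero>\<^bsub>R\<^esub>}}"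

definition tp_add :: "('a, 'b) ring_scheme \<Rightarrow> (nat \<Rightarrow> 'a) \<Rightarrow> (nat \<Rightarrow> 'a) \<Rightarrow> nat \<Rightarrow> 'a" where
  "tp_add R p q = (\<lambda>i. p i \<oplus>\<^bsub>R\<^esub> q i)"

text \<open>(a t^i)(b t^j) = a \<sigma>^i(b) t^(i+j).\<close>
definition tp_mult :: "('a, 'b) ring_scheme \<Rightarrow> ('a \<Rightarrow> 'a) \<Rightarrow> (nat \<Rightarrow> 'a) \<Rightarrow> (nat \<Rightarrow> 'a) \<Rightarrow> nat \<Rightarrow> 'a" where
  "tp_mult R \<sigma> p q = (\<lambda>n. \<Oplus>\<^bsub>R\<^esub> i\<in>{..n}. p i \<otimes>\<^bsub>R\<^esub> (\<sigma> ^^ i) (q (n - i)))"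

definition tp_one :: "('a, 'b) ring_scheme \<Rightarrow> nat \<Rightarrow> 'a" where
  "tp_one R = (\<lambda>i. if i = 0 then \<one>\<^bsub>R\<^esub> else \<zero>\<^bsub>R\<^esub>)"

definition tp_unit :: "('a, 'b) ring_scheme \<Rightarrow> 'a set \<Rightarrow> ('a \<Rightarrow> 'a) \<Rightarrow> (nat \<Rightarrow> 'a) \<Rightarrow> bool" where
  "tp_unit R D \<sigma> p \<longleftrightarrow> p \<in> tpolys R D \<and>
     (\<exists>q\<in>tpolys R D. tp_mult R \<sigma> p q = tp_one R \<and> tp_mult R \<sigma> q p = tp_one R)"

definition tp_irreducible :: "('a, 'b) ring_scheme \<Rightarrow> 'a set \<Rightarrow> ('a \<Rightarrow> 'a) \<Rightarrow> (nat \<Rightarrow> 'a) \<Rightarrow> bool" where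
  "tp_irreducible R D \<sigma> f \<longleftrightarrow> f \<in> tpolys R D \<and> \<not> tp_unit R D \<sigma> f \<and>
     \<not> (\<exists>g\<in>tpolys R D. \<exists>h\<in>tpolys R D.
           \<not> tp_unit R D \<sigma> g \<and> \<not> tp_unit R D \<sigma> h \<and> f = tp_mult R \<sigma> g h)"

definition tp_f :: "('a, 'b) ring_scheme \<Rightarrow> nat \<Rightarrow> 'a \<Rightarrow> nat \<Rightarrow> 'a" where
  "tp_f R m d = (\<lambda>i. if i = m then \<one>\<^bsub>R\<^esub> else if i = 0 then \<ominus>\<^bsub>R\<^esub> d else \<zero>\<^bsub>R\<^esub>)"

definition sf_carrier :: "('a, 'b) ring_scheme \<Rightarrow> 'a set \<Rightarrow> nat \<Rightarrow> (nat \<Rightarrow> 'a) set" where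
  "sf_carrier R D m = {p \<in> tpolys R D. \<forall>i\<ge>m. p i = \<zero>\<^bsub>R\<^esub>}"

definition right_rem ::
  "('a, 'b) ring_scheme \<Rightarrow> 'a set \<Rightarrow> ('a \<Rightarrow> 'a) \<Rightarrow> nat \<Rightarrow> (nat \<Rightarrow> 'a) \<Rightarrow> (nat \<Rightarrow> 'a) \<Rightarrow> nat \<Rightarrow> 'a" where
  "right_rem R D \<sigma> m f g = (THE r. r \<in> sf_carrier R D m \<and>
       (\<exists>q\<in>tpolys R D. g = tp_add R (tp_mult R \<sigma> q f) r))"

definition Sf :: "('a, 'b) ring_scheme \<Rightarrow> 'a set \<Rightarrow> ('a \<Rightarrow> 'a) \<Rightarrow> 'a \<Rightarrow> nat \<Rightarrow> (nat \<Rightarrow> 'a) ring" where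
  "Sf R D \<sigma> d m = \<lparr>carrier = sf_carrier R D m,
     mult = (\<lambda>g h. right_rem R D \<sigma> m (tp_f R m d) (tp_mult R \<sigma> g h)),
     one = tp_one R,
     zero = (\<lambda>i. \<zero>\<^bsub>R\<^esub>),
     add = tp_add R\<rparr>"

end

theory Submission
  imports Defs
begin

text \<open>The evaluation map p \<mapsto> \<Sum> p_i t^i from S_f = (D, \<sigma>, d) to S is additive, and bijective
  because the powers t^i form a basis. It is also multiplicative: associativity of the monomials
  gives (a t^i)(b t^j) = a \<sigma>^i(b) t^(i+j), and for i + j \<ge> m this equals
  a \<sigma>^i(b) \<sigma>^(i+j-m)(d) t^(i+j-m), which is exactly how S_f multiplies.

  For (ii), a proper factorisation f = g h gives nonzero g, h of degree below m whose product in
  S_f \<cong> S is zero, which is impossible in a right division ring. Multiplying coefficients by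
  central elements shows that the centre F of D lies in the right nucleus. Hence S is a
  finite-dimensional right F-vector space on which every left multiplication is F-linear and
  injective, and therefore bijective. Finally the maps p \<mapsto> \<Sum> p_i \<omega>^(k i) t^i, k < m, are
  m distinct automorphisms that fix D and form the cyclic group generated by the one with k = 1.\<close>

section \<open>Nonassociative rings\<close>

locale na_ring =
  fixes S :: "('a, 'b) ring_scheme" (structure)
  assumes nonassoc_ring: "nonassoc_ring S"

sublocale na_ring \<subseteq> abelian_group S
  using nonassoc_ring unfolding nonassoc_ring_def by auto

context na_ring
begin

lemma m_closed [intro, simp]: "x \<in> carrier S \<Longrightarrow> y \<in> carrier S \<Longrightarrow> x \<otimes> y \<in> carrier S"
  using nonassoc_ring unfolding nonassoc_ring_def by auto

lemma one_closed [intro, simp]: "\<one> \<in> carrier S"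
  using nonassoc_ring unfolding nonassoc_ring_def by auto

lemma l_one [simp]: "x \<in> carrier S \<Longrightarrow> \<one> \<otimes> x = x"
  using nonassoc_ring unfolding nonassoc_ring_def by auto

lemma r_one [simp]: "x \<in> carrier S \<Longrightarrow> x \<otimes> \<one> = x"
  using nonassoc_ring unfolding nonassoc_ring_def by auto

lemma l_distr:
  "x \<in> carrier S \<Longrightarrow> y \<in> carrier S \<Longrightarrow> z \<in> carrier S \<Longrightarrow> (x \<oplus> y) \<otimes> z = x \<otimes> z \<oplus> y \<otimes> z"
  using nonassoc_ring unfolding nonassoc_ring_def by auto

lemma r_distr:
  "x \<in> carrier S \<Longrightarrow> y \<in> carrier S \<Longrightarrow> z \<in> carrier S \<Longrightarrow> z \<otimes> (x \<oplus> y) = z \<otimes> x \<oplus> z \<otimes> y"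
  using nonassoc_ring unfolding nonassoc_ring_def by auto

lemma l_null [simp]: "x \<in> carrier S \<Longrightarrow> \<zero> \<otimes> x = \<zero>"
  by (metis add.right_cancel l_distr l_zero m_closed zero_closed)

lemma r_null [simp]: "x \<in> carrier S \<Longrightarrow> x \<otimes> \<zero> = \<zero>"
  by (metis add.right_cancel r_distr l_zero m_closed zero_closed)

lemma l_minus: "x \<in> carrier S \<Longrightarrow> y \<in> carrier S \<Longrightarrow> (\<ominus> x) \<otimes> y = \<ominus> (x \<otimes> y)"
  by (metis a_inv_closed add.inv_equality l_distr l_neg l_null m_closed)

lemma r_minus: "x \<in> carrier S \<Longrightarrow> y \<in> carrier S \<Longrightarrow> x \<otimes> (\<ominus> y) = \<ominus> (x \<otimes> y)"
  by (metis a_inv_closed add.inv_equality r_distr l_neg r_null m_closed)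

lemma minus_eq_zero_imp_eq: "x \<in> carrier S \<Longrightarrow> y \<in> carrier S \<Longrightarrow> x \<ominus> y = \<zero> \<Longrightarrow> x = y"
  by (metis a_minus_def add.inv_closed add.inv_equality minus_minus r_neg)

lemma minus_zero [simp]: "\<ominus> \<zero> = \<zero>"
  by (rule minus_equality) auto

lemma finsum_rdistr:
  assumes "y \<in> carrier S" "f \<in> A \<rightarrow> carrier S"
  shows "(\<Oplus>i\<in>A. f i) \<otimes> y = (\<Oplus>i\<in>A. f i \<otimes> y)"
  using assms(2)
proof (induction A rule: infinite_finite_induct)
  case (insert a A)
  then show ?case
    using assms(1) by (simp add: l_distr finsum_closed Pi_def)
qed (use assms in simp_all)

lemma finsum_ldistr:
  assumes "y \<in> carrier S" "f \<in> A \<rightarrow> carrier S"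
  shows "y \<otimes> (\<Oplus>i\<in>A. f i) = (\<Oplus>i\<in>A. y \<otimes> f i)"
  using assms(2)
proof (induction A rule: infinite_finite_induct)
  case (insert a A)
  then show ?case
    using assms(1) by (simp add: r_distr finsum_closed Pi_def)
qed (use assms in simp_all)

lemma finsum_swap:
  assumes "finite A" "finite B" "\<And>i j. i \<in> A \<Longrightarrow> j \<in> B \<Longrightarrow> f i j \<in> carrier S"
  shows "(\<Oplus>i\<in>A. \<Oplus>j\<in>B. f i j) = (\<Oplus>j\<in>B. \<Oplus>i\<in>A. f i j)"
  using assms
proof (induction A rule: finite_induct)
  case (insert a A)
  have "(\<Oplus>i\<in>insert a A. \<Oplus>j\<in>B. f i j) = (\<Oplus>j\<in>B. f a j) \<oplus> (\<Oplus>i\<in>A. \<Oplus>j\<in>B. f i j)"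
    using insert by (subst finsum_insert) (auto simp: Pi_def intro!: finsum_closed)
  also have "\<dots> = (\<Oplus>j\<in>B. f a j \<oplus> (\<Oplus>i\<in>A. f i j))"
    using insert by (subst finsum_addf) (auto simp: Pi_def intro!: finsum_closed)
  also have "\<dots> = (\<Oplus>j\<in>B. \<Oplus>i\<in>insert a A. f i j)"
    using insert by (intro finsum_cong') (auto simp: Pi_def intro!: finsum_closed)
  finally show ?case .
qed (simp add: finsum_zero)

lemma finsum_delta:
  assumes "finite A" "k \<in> A" "x \<in> carrier S"
  shows "(\<Oplus>i\<in>A. if i = k then x else \<zero>) = x"
  using finsum_singleton[of k A "\<lambda>_. x"] assms by (simp add: eq_commute)

lemma finsum_neg:
  "f \<in> A \<rightarrow> carrier S \<Longrightarrow> (\<Oplus>i\<in>A. \<ominus> f i) = \<ominus> (\<Oplus>i\<in>A. f i)"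
proof (induction A rule: infinite_finite_induct)
  case (insert a A)
  then show ?case by (simp add: minus_add finsum_closed Pi_def)
qed simp_all

lemma right_division_ring_no_zero_divisors:
  assumes "right_division_ring S" "x \<in> carrier S" "y \<in> carrier S" "y \<noteq> \<zero>" "x \<otimes> y = \<zero>"
  shows "x = \<zero>"
proof -
  have "inj_on (\<lambda>x. x \<otimes> y) (carrier S)"
    using assms unfolding right_division_ring_def bij_betw_def by auto
  then show ?thesis using assms by (auto dest: inj_onD[of _ _ x \<zero>])
qed

end

lemma na_iso_inv:
  assumes iso: "na_iso R R' h" and closed: "\<And>x y. x \<in> carrier R \<Longrightarrow> y \<in> carrier R \<Longrightarrow>
      x \<oplus>\<^bsub>R\<^esub> y \<in> carrier R \<and> x \<otimes>\<^bsub>R\<^esub> y \<in> carrier R"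
    and one: "\<one>\<^bsub>R\<^esub> \<in> carrier R"
  shows "na_iso R' R (inv_into (carrier R) h)"
proof -
  let ?g = "inv_into (carrier R) h"
  have bij: "bij_betw h (carrier R) (carrier R')" using iso unfolding na_iso_def by auto
  have g_in: "\<And>x. x \<in> carrier R' \<Longrightarrow> ?g x \<in> carrier R"
    and hg: "\<And>x. x \<in> carrier R' \<Longrightarrow> h (?g x) = x"
    and gh: "\<And>a. a \<in> carrier R \<Longrightarrow> ?g (h a) = a"
    using bij by (auto simp: bij_betw_def inv_into_into f_inv_into_f)
  have "?g (x \<oplus>\<^bsub>R'\<^esub> y) = ?g x \<oplus>\<^bsub>R\<^esub> ?g y \<and> ?g (x \<otimes>\<^bsub>R'\<^esub> y) = ?g x \<otimes>\<^bsub>R\<^esub> ?g y"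
    if "x \<in> carrier R'" "y \<in> carrier R'" for x y
  proof -
    have "h (?g x \<oplus>\<^bsub>R\<^esub> ?g y) = x \<oplus>\<^bsub>R'\<^esub> y" "h (?g x \<otimes>\<^bsub>R\<^esub> ?g y) = x \<otimes>\<^bsub>R'\<^esub> y"
      using iso g_in hg that unfolding na_iso_def by auto
    then show ?thesis using gh closed g_in that by metis
  qed
  moreover have "?g \<one>\<^bsub>R'\<^esub> = \<one>\<^bsub>R\<^esub>" using iso gh[OF one] unfolding na_iso_def by auto
  ultimately show ?thesis using bij_betw_inv_into[OF bij] unfolding na_iso_def by auto
qed

lemma na_iso_comp: "na_iso R1 R2 f \<Longrightarrow> na_iso R2 R3 g \<Longrightarrow> na_iso R1 R3 (g \<circ> f)"
  unfolding na_iso_def by (auto intro: bij_betw_trans dest: bij_betwE)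

lemma na_iso_cong:
  assumes "na_iso R R' f" "\<And>x. x \<in> carrier R \<Longrightarrow> g x = f x"
    and "\<And>x y. x \<in> carrier R \<Longrightarrow> y \<in> carrier R \<Longrightarrow> x \<oplus>\<^bsub>R\<^esub> y \<in> carrier R \<and> x \<otimes>\<^bsub>R\<^esub> y \<in> carrier R"
    and "\<one>\<^bsub>R\<^esub> \<in> carrier R"
  shows "na_iso R R' g"
  using assms bij_betw_cong[of "carrier R" g f] unfolding na_iso_def by auto


section \<open>Right vector spaces over a division subring\<close>

locale right_vector_space = na_ring +
  fixes K :: "'a set"
  assumes K_carrier: "K \<subseteq> carrier S"
    and K_zero [intro, simp]: "\<zero> \<in> K" and K_one [intro, simp]: "\<one> \<in> K"
    and one_not_zero: "\<one> \<noteq> \<zero>"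
    and K_add [intro, simp]: "a \<in> K \<Longrightarrow> b \<in> K \<Longrightarrow> a \<oplus> b \<in> K"
    and K_neg [intro, simp]: "a \<in> K \<Longrightarrow> \<ominus> a \<in> K"
    and K_mult [intro, simp]: "a \<in> K \<Longrightarrow> b \<in> K \<Longrightarrow> a \<otimes> b \<in> K"
    and K_inv: "a \<in> K \<Longrightarrow> a \<noteq> \<zero> \<Longrightarrow> \<exists>b\<in>K. a \<otimes> b = \<one>"
    and smult_assoc: "x \<in> carrier S \<Longrightarrow> a \<in> K \<Longrightarrow> b \<in> K \<Longrightarrow> (x \<otimes> a) \<otimes> b = x \<otimes> (a \<otimes> b)"
begin

lemma K_closed [intro, simp]: "a \<in> K \<Longrightarrow> a \<in> carrier S"
  using K_carrier by auto

lemma K_finsum [intro]: "h \<in> A \<rightarrow> K \<Longrightarrow> (\<Oplus>i\<in>A. h i) \<in> K"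
proof (induction A rule: infinite_finite_induct)
  case (insert a A)
  then show ?case by (subst finsum_insert) (auto simp: Pi_def)
qed auto

lemma smult_eq_zero: "x \<in> carrier S \<Longrightarrow> c \<in> K \<Longrightarrow> c \<noteq> \<zero> \<Longrightarrow> x \<otimes> c = \<zero> \<Longrightarrow> x = \<zero>"
  by (metis K_inv K_closed smult_assoc l_null r_one)

definition span :: "'j set \<Rightarrow> ('j \<Rightarrow> 'a) \<Rightarrow> 'a set" where
  "span J v = {x. \<exists>c. (\<forall>j\<in>J. c j \<in> K) \<and> x = (\<Oplus>j\<in>J. v j \<otimes> c j)}"

context
  fixes J :: "'j set" and v :: "'j \<Rightarrow> 'a"
  assumes v: "v \<in> J \<rightarrow> carrier S"
begin

lemma v_closed [simp]: "j \<in> J \<Longrightarrow> v j \<in> carrier S"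
  using v by auto

lemma span_closed: "x \<in> span J v \<Longrightarrow> x \<in> carrier S"
  using v unfolding span_def by (auto intro!: finsum_closed)

lemma span_zero: "\<zero> \<in> span J v"
proof -
  have "(\<Oplus>j\<in>J. v j \<otimes> \<zero>) = (\<Oplus>j\<in>J. \<zero>)" by (intro finsum_cong') auto
  then have "(\<Oplus>j\<in>J. v j \<otimes> \<zero>) = \<zero>" by (simp add: finsum_zero)
  then show ?thesis unfolding span_def by (intro CollectI exI[of _ "\<lambda>_. \<zero>"]) auto
qed

lemma span_add: "x \<in> span J v \<Longrightarrow> y \<in> span J v \<Longrightarrow> x \<oplus> y \<in> span J v"
proof -
  assume "x \<in> span J v" "y \<in> span J v"
  then obtain a b where ab: "\<forall>j\<in>J. a j \<in> K" "\<forall>j\<in>J. b j \<in> K"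
    and xy: "x = (\<Oplus>j\<in>J. v j \<otimes> a j)" "y = (\<Oplus>j\<in>J. v j \<otimes> b j)"
    unfolding span_def by blast
  have "x \<oplus> y = (\<Oplus>j\<in>J. v j \<otimes> a j \<oplus> v j \<otimes> b j)"
    unfolding xy using v ab by (subst finsum_addf) auto
  also have "\<dots> = (\<Oplus>j\<in>J. v j \<otimes> (a j \<oplus> b j))"
    using v ab by (intro finsum_cong') (auto simp: r_distr)
  finally show ?thesis
    unfolding span_def using ab by (intro CollectI exI[of _ "\<lambda>j. a j \<oplus> b j"]) auto
qed

lemma span_smult: "x \<in> span J v \<Longrightarrow> c \<in> K \<Longrightarrow> x \<otimes> c \<in> span J v"
proof -
  assume c: "c \<in> K" and "x \<in> span J v"
  then obtain a where a: "\<forall>j\<in>J. a j \<in> K" and x: "x = (\<Oplus>j\<in>J. v j \<otimes> a j)"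
    unfolding span_def by blast
  have "x \<otimes> c = (\<Oplus>j\<in>J. v j \<otimes> (a j \<otimes> c))"
    unfolding x using v a c by (subst finsum_rdistr) (auto simp: smult_assoc intro!: finsum_cong')
  then show ?thesis
    unfolding span_def using a c by (intro CollectI exI[of _ "\<lambda>j. a j \<otimes> c"]) auto
qed

lemma span_diff: "x \<in> span J v \<Longrightarrow> y \<in> span J v \<Longrightarrow> x \<ominus> y \<in> span J v"
  using span_add span_smult[of y "\<ominus> \<one>"] span_closed
  by (simp add: a_minus_def r_minus)

lemma span_generator: "j \<in> J \<Longrightarrow> finite J \<Longrightarrow> c \<in> K \<Longrightarrow> v j \<otimes> c \<in> span J v"
proof -
  assume j: "j \<in> J" "finite J" and c: "c \<in> K"
  have "(\<Oplus>j'\<in>J. v j' \<otimes> (if j' = j then c else \<zero>)) = (\<Oplus>j'\<in>J. if j' = j then v j \<otimes> c else \<zero>)"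
    by (intro finsum_cong') (use c in auto)
  also have "\<dots> = v j \<otimes> c" by (rule finsum_delta) (use j c in auto)
  finally show ?thesis unfolding span_def using c
    by (intro CollectI exI[of _ "\<lambda>j'. if j' = j then c else \<zero>"]) auto
qed

lemma span_finsum: "g \<in> A \<rightarrow> span J v \<Longrightarrow> (\<Oplus>i\<in>A. g i) \<in> span J v"
proof (induction A rule: infinite_finite_induct)
  case (insert a A)
  then show ?case
    using span_closed by (subst finsum_insert) (auto intro: span_add)
qed (simp_all add: span_zero)

end

lemma span_empty: "span {} v = {\<zero>}"
  unfolding span_def by auto

lemma span_insert:
  assumes v: "v \<in> insert j J \<rightarrow> carrier S" and "finite J" "j \<notin> J" and x: "x \<in> span (insert j J) v"
  shows "\<exists>a\<in>K. \<exists>s\<in>span J v. x = v j \<otimes> a \<oplus> s"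
proof -
  obtain c where c: "\<forall>i\<in>insert j J. c i \<in> K" and "x = (\<Oplus>i\<in>insert j J. v i \<otimes> c i)"
    using x unfolding span_def by blast
  then have "x = v j \<otimes> c j \<oplus> (\<Oplus>i\<in>J. v i \<otimes> c i)"
    using assms by (subst (asm) finsum_insert) auto
  moreover have "(\<Oplus>i\<in>J. v i \<otimes> c i) \<in> span J v" unfolding span_def using c by auto
  ultimately show ?thesis using c by blast
qed

text \<open>One step of Gaussian elimination: subtracting the right multiple of the pivot vector
  removes the component along the generator j.\<close>

lemma eliminate_component:
  assumes v: "v \<in> J \<rightarrow> carrier S" "v j \<in> carrier S" and s: "s \<in> span J v" "s' \<in> span J v"
    and a: "a \<in> K" "a' \<in> K" "b \<in> K" "a' \<otimes> b = \<one>"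
  shows "(v j \<otimes> a \<oplus> s) \<ominus> (v j \<otimes> a' \<oplus> s') \<otimes> (b \<otimes> a) \<in> span J v"
proof -
  have "(v j \<otimes> a') \<otimes> (b \<otimes> a) = v j \<otimes> a"
    using v a by (metis K_mult l_one smult_assoc K_closed)
  then have "(v j \<otimes> a' \<oplus> s') \<otimes> (b \<otimes> a) = v j \<otimes> a \<oplus> s' \<otimes> (b \<otimes> a)"
    using v a span_closed[OF v(1) s(2)] by (simp add: l_distr)
  then have "(v j \<otimes> a \<oplus> s) \<ominus> (v j \<otimes> a' \<oplus> s') \<otimes> (b \<otimes> a) = s \<ominus> s' \<otimes> (b \<otimes> a)"
    using v a span_closed[OF v(1)] s by (simp add: a_minus_def minus_add a_ac r_neg2)
  then show ?thesis using s a span_diff[OF v(1)] span_smult[OF v(1)] by simp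
qed

lemma dependence_lift:
  assumes I: "finite I" "k \<in> I" and w: "w \<in> I \<rightarrow> carrier S"
    and l: "\<forall>i\<in>I. l i \<in> K" and c: "\<forall>i\<in>I - {k}. c i \<in> K"
    and nz: "\<exists>i\<in>I - {k}. c i \<noteq> \<zero>"
    and dep: "(\<Oplus>i\<in>I - {k}. (w i \<ominus> w k \<otimes> l i) \<otimes> c i) = \<zero>"
  shows "\<exists>c'. (\<forall>i\<in>I. c' i \<in> K) \<and> (\<exists>i\<in>I. c' i \<noteq> \<zero>) \<and> (\<Oplus>i\<in>I. w i \<otimes> c' i) = \<zero>"
proof (intro exI conjI)
  let ?s = "\<Oplus>i\<in>I - {k}. l i \<otimes> c i"
  have wi: "\<And>i. i \<in> I \<Longrightarrow> w i \<in> carrier S" using w by auto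
  have wk: "w k \<in> carrier S" using wi I by auto
  have s: "?s \<in> K" using l c by (intro K_finsum) auto
  have f1: "(\<lambda>i. w i \<otimes> c i) \<in> I - {k} \<rightarrow> carrier S" using wi c by auto
  have f2: "(\<lambda>i. \<ominus> (w k \<otimes> (l i \<otimes> c i))) \<in> I - {k} \<rightarrow> carrier S" using wk l c by auto
  have f3: "(\<lambda>i. w k \<otimes> (l i \<otimes> c i)) \<in> I - {k} \<rightarrow> carrier S" using wk l c by auto
  have "(\<Oplus>i\<in>I - {k}. (w i \<ominus> w k \<otimes> l i) \<otimes> c i)
      = (\<Oplus>i\<in>I - {k}. w i \<otimes> c i \<oplus> \<ominus> (w k \<otimes> (l i \<otimes> c i)))"
    by (intro finsum_cong') (use wi wk l c in \<open>auto simp: a_minus_def l_distr l_minus smult_assoc\<close>)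
  also have "\<dots> = (\<Oplus>i\<in>I - {k}. w i \<otimes> c i) \<oplus> \<ominus> (\<Oplus>i\<in>I - {k}. w k \<otimes> (l i \<otimes> c i))"
    using finsum_addf[OF f1 f2] finsum_neg[OF f3] by simp
  also have "(\<Oplus>i\<in>I - {k}. w k \<otimes> (l i \<otimes> c i)) = w k \<otimes> ?s"
    by (rule finsum_ldistr[symmetric]) (use wk l c in auto)
  finally have sum: "(\<Oplus>i\<in>I - {k}. w i \<otimes> c i) \<oplus> \<ominus> (w k \<otimes> ?s) = \<zero>"
    using dep by simp
  have "(\<Oplus>i\<in>I. w i \<otimes> (c(k := \<ominus> ?s)) i) = (\<Oplus>i\<in>insert k (I - {k}). w i \<otimes> (c(k := \<ominus> ?s)) i)"
    using I by (simp add: insert_absorb)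
  also have "\<dots> = w k \<otimes> \<ominus> ?s \<oplus> (\<Oplus>i\<in>I - {k}. w i \<otimes> (c(k := \<ominus> ?s)) i)"
    by (subst finsum_insert) (use I wi wk c s in auto)
  also have "(\<Oplus>i\<in>I - {k}. w i \<otimes> (c(k := \<ominus> ?s)) i) = (\<Oplus>i\<in>I - {k}. w i \<otimes> c i)"
    by (intro finsum_cong') (use wi c in auto)
  also have "w k \<otimes> \<ominus> ?s = \<ominus> (w k \<otimes> ?s)" using wk s by (simp add: r_minus)
  also have "\<ominus> (w k \<otimes> ?s) \<oplus> (\<Oplus>i\<in>I - {k}. w i \<otimes> c i) = \<zero>"
    using sum a_comm[of "\<ominus> (w k \<otimes> ?s)"] finsum_closed[OF f1] wk s by simp
  finally show "(\<Oplus>i\<in>I. w i \<otimes> (c(k := \<ominus> ?s)) i) = \<zero>" .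
  show "\<forall>i\<in>I. (c(k := \<ominus> ?s)) i \<in> K" using c s by auto
  obtain i where "i \<in> I - {k}" "c i \<noteq> \<zero>" using nz by blast
  then show "\<exists>i\<in>I. (c(k := \<ominus> ?s)) i \<noteq> \<zero>" by (intro bexI[of _ i]) auto
qed

lemma span_dependent:
  assumes "finite J" "v \<in> J \<rightarrow> carrier S"
  shows "finite I \<Longrightarrow> card J < card I \<Longrightarrow> \<forall>i\<in>I. w i \<in> span J v \<Longrightarrow>
    \<exists>c. (\<forall>i\<in>I. c i \<in> K) \<and> (\<exists>i\<in>I. c i \<noteq> \<zero>) \<and> (\<Oplus>i\<in>I. w i \<otimes> c i) = \<zero>"
  using assms
proof (induction J arbitrary: I w rule: finite_induct)
  case empty
  then have "\<And>i. i \<in> I \<Longrightarrow> w i = \<zero>" by (simp add: span_empty)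
  then have "(\<Oplus>i\<in>I. w i \<otimes> \<one>) = (\<Oplus>i\<in>I. \<zero>)" by (intro finsum_cong') auto
  then have sum: "(\<Oplus>i\<in>I. w i \<otimes> \<one>) = \<zero>" by (simp add: finsum_zero)
  have "I \<noteq> {}" using empty.prems(2) by auto
  then obtain i0 where i0: "i0 \<in> I" by blast
  show ?case
  proof (intro exI[of _ "\<lambda>_. \<one>"] conjI)
    show "\<exists>i\<in>I. \<one> \<noteq> \<zero>" using i0 one_not_zero by blast
  qed (simp_all add: sum)
next
  case (insert j J)
  then have vJ: "v \<in> J \<rightarrow> carrier S" and vj: "v j \<in> carrier S" by auto
  have "\<forall>i\<in>I. \<exists>a\<in>K. \<exists>s\<in>span J v. w i = v j \<otimes> a \<oplus> s"
    using span_insert[OF insert.prems(4) insert.hyps] insert.prems(3) by blast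
  then obtain a where a: "\<And>i. i \<in> I \<Longrightarrow> a i \<in> K \<and> (\<exists>s\<in>span J v. w i = v j \<otimes> a i \<oplus> s)"
    using bchoice[of I] by (metis (no_types, lifting))
  then obtain s where s: "\<And>i. i \<in> I \<Longrightarrow> s i \<in> span J v \<and> w i = v j \<otimes> a i \<oplus> s i"
    using bchoice[of I] by (metis (no_types, lifting))
  have a: "\<And>i. i \<in> I \<Longrightarrow> a i \<in> K" and w: "\<And>i. i \<in> I \<Longrightarrow> w i = v j \<otimes> a i \<oplus> s i"
    and s_closed: "\<And>i. i \<in> I \<Longrightarrow> s i \<in> carrier S"
    using a s span_closed[OF vJ] by blast+
  have s: "\<And>i. i \<in> I \<Longrightarrow> s i \<in> span J v" using s by blast
  show ?case
  proof (cases "\<forall>i\<in>I. a i = \<zero>")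
    case True
    have "\<forall>i\<in>I. w i \<in> span J v" using w s s_closed True vj by simp
    moreover have "card J < card I" using insert.prems(2) insert.hyps by simp
    ultimately show ?thesis using insert.IH[OF insert.prems(1) _ _ vJ, of w] by blast
  next
    case False
    then obtain k where k: "k \<in> I" "a k \<noteq> \<zero>" by blast
    then obtain b where b: "b \<in> K" "a k \<otimes> b = \<one>" using K_inv a by blast
    define l where "l i = b \<otimes> a i" for i
    have l: "\<forall>i\<in>I. l i \<in> K" unfolding l_def using a b by blast
    have "w i \<ominus> w k \<otimes> l i \<in> span J v" if "i \<in> I - {k}" for i
      using eliminate_component[OF vJ vj s[of i] s[of k] a[of i] a[of k] b] w[of i] w[of k] that k
      unfolding l_def by simp
    moreover have "card J < card (I - {k})" using insert.prems(1,2) insert.hyps k by simp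
    ultimately obtain c where c: "\<forall>i\<in>I - {k}. c i \<in> K" "\<exists>i\<in>I - {k}. c i \<noteq> \<zero>"
      and dep: "(\<Oplus>i\<in>I - {k}. (w i \<ominus> w k \<otimes> l i) \<otimes> c i) = \<zero>"
      using insert.IH[OF _ _ _ vJ, of "I - {k}" "\<lambda>i. w i \<ominus> w k \<otimes> l i"] insert.prems(1) by blast
    have "w \<in> I \<rightarrow> carrier S" using w a s_closed vj by simp
    then show ?thesis using dependence_lift[OF insert.prems(1) k(1) _ l c dep] by blast
  qed
qed

definition linear_endo :: "('a \<Rightarrow> 'a) \<Rightarrow> bool" where
  "linear_endo L \<longleftrightarrow> (\<forall>x\<in>carrier S. L x \<in> carrier S) \<and>
     (\<forall>x\<in>carrier S. \<forall>y\<in>carrier S. L (x \<oplus> y) = L x \<oplus> L y) \<and>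
     (\<forall>x\<in>carrier S. \<forall>c\<in>K. L (x \<otimes> c) = L x \<otimes> c)"

lemma linear_endo_closed: "linear_endo L \<Longrightarrow> x \<in> carrier S \<Longrightarrow> L x \<in> carrier S"
  unfolding linear_endo_def by auto

lemma linear_endo_add:
  "linear_endo L \<Longrightarrow> x \<in> carrier S \<Longrightarrow> y \<in> carrier S \<Longrightarrow> L (x \<oplus> y) = L x \<oplus> L y"
  unfolding linear_endo_def by auto

lemma linear_endo_smult: "linear_endo L \<Longrightarrow> x \<in> carrier S \<Longrightarrow> c \<in> K \<Longrightarrow> L (x \<otimes> c) = L x \<otimes> c"
  unfolding linear_endo_def by auto

lemma linear_endo_zero: "linear_endo L \<Longrightarrow> L \<zero> = \<zero>"
proof -
  assume L: "linear_endo L"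
  have "L \<zero> = L (\<zero> \<otimes> \<zero>)" by simp
  also have "\<dots> = L \<zero> \<otimes> \<zero>" by (rule linear_endo_smult[OF L]) auto
  also have "\<dots> = \<zero>" using linear_endo_closed[OF L] by simp
  finally show ?thesis .
qed

lemma linear_endo_neg: "linear_endo L \<Longrightarrow> x \<in> carrier S \<Longrightarrow> L (\<ominus> x) = \<ominus> L x"
  using linear_endo_smult[of L x "\<ominus> \<one>"] linear_endo_closed[of L x] by (simp add: r_minus)

lemma linear_endo_finsum:
  assumes L: "linear_endo L"
  shows "g \<in> A \<rightarrow> carrier S \<Longrightarrow> L (\<Oplus>i\<in>A. g i) = (\<Oplus>i\<in>A. L (g i))"
proof (induction A rule: infinite_finite_induct)
  case (insert a A)
  then have "g a \<in> carrier S" "g \<in> A \<rightarrow> carrier S" "(\<lambda>i. L (g i)) \<in> A \<rightarrow> carrier S"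
    using linear_endo_closed[OF L] by auto
  with insert show ?case
    by (simp add: linear_endo_add[OF L] linear_endo_closed[OF L] finsum_closed)
qed (simp_all add: linear_endo_zero[OF L])

lemma linear_endo_comp: "linear_endo L \<Longrightarrow> linear_endo L' \<Longrightarrow> linear_endo (L \<circ> L')"
  unfolding linear_endo_def by auto

lemma linear_endo_funpow: "linear_endo L \<Longrightarrow> linear_endo (L ^^ n)"
proof (induction n)
  case 0
  show ?case unfolding linear_endo_def by simp
qed (simp add: linear_endo_comp)

lemma linear_endo_orbit_sum_Suc:
  assumes L: "linear_endo L" and y: "y \<in> carrier S" and c: "\<And>i. i \<le> Suc n \<Longrightarrow> c i \<in> K"
  shows "(\<Oplus>i\<in>{..Suc n}. (L ^^ i) y \<otimes> c i) = L (\<Oplus>i\<in>{..n}. (L ^^ i) y \<otimes> c (Suc i)) \<oplus> y \<otimes> c 0"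
proof -
  have Lk: "(L ^^ k) y \<in> carrier S" for k
    using linear_endo_closed[OF linear_endo_funpow[OF L] y] .
  have "L (\<Oplus>i\<in>{..n}. (L ^^ i) y \<otimes> c (Suc i)) = (\<Oplus>i\<in>{..n}. L ((L ^^ i) y) \<otimes> c (Suc i))"
    using Lk c by (subst linear_endo_finsum[OF L])
      (auto simp: linear_endo_smult[OF L] linear_endo_closed[OF L] intro!: finsum_cong')
  also have "\<dots> = (\<Oplus>i\<in>{..n}. (L ^^ Suc i) y \<otimes> c (Suc i))" by simp
  finally show ?thesis
    using finsum_Suc2[of "\<lambda>i. (L ^^ i) y \<otimes> c i" n] Lk c by (simp del: funpow.simps)
qed

lemma linear_endo_image_smult:
  assumes L: "linear_endo L" and w: "w \<in> carrier S" and y: "y \<in> carrier S"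
    and c: "c \<in> K" "c \<noteq> \<zero>" and eq: "L w \<oplus> y \<otimes> c = \<zero>"
  shows "y \<in> L ` carrier S"
proof -
  obtain b where b: "b \<in> K" "c \<otimes> b = \<one>" using K_inv[OF c] by blast
  have Lw: "L w \<in> carrier S" using linear_endo_closed[OF L w] .
  have "y \<otimes> c \<oplus> L w = \<zero>" using eq a_comm[of "L w" "y \<otimes> c"] Lw y c by simp
  then have "y \<otimes> c = \<ominus> L w" using add.inv_equality Lw y c by simp
  then have "y = (\<ominus> L w) \<otimes> b" using smult_assoc[OF y c(1) b(1)] b y by simp
  also have "\<dots> = L (\<ominus> (w \<otimes> b))"
    using w b Lw by (simp add: l_minus linear_endo_neg[OF L] linear_endo_smult[OF L])
  finally show ?thesis by (rule image_eqI) (use w b in auto)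
qed

text \<open>A nontrivial relation among y, L y, ..., L^n y with lowest coefficient c 0 \<noteq> 0
  exhibits y as an image; otherwise injectivity of L shortens the relation.\<close>

lemma dependent_orbit_in_image:
  assumes L: "linear_endo L" and inj: "inj_on L (carrier S)" and y: "y \<in> carrier S"
  shows "\<forall>i\<le>n. c i \<in> K \<Longrightarrow> \<exists>i\<le>n. c i \<noteq> \<zero> \<Longrightarrow> (\<Oplus>i\<in>{..n}. (L ^^ i) y \<otimes> c i) = \<zero> \<Longrightarrow>
    y \<in> L ` carrier S"
proof (induction n arbitrary: c)
  case 0
  then have "y \<otimes> c 0 = \<zero>" using finsum_0[of "\<lambda>i. (L ^^ i) y \<otimes> c i"] y by simp
  then have "y = \<zero>" using smult_eq_zero[OF y, of "c 0"] 0 by simp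
  then show ?case using linear_endo_zero[OF L] by (metis image_eqI zero_closed)
next
  case (Suc n)
  have c: "c i \<in> K" if "i \<le> Suc n" for i using Suc.prems(1) that by blast
  define w where "w = (\<Oplus>i\<in>{..n}. (L ^^ i) y \<otimes> c (Suc i))"
  have w: "w \<in> carrier S"
    unfolding w_def using c linear_endo_closed[OF linear_endo_funpow[OF L] y] by (intro finsum_closed) auto
  have Lw: "L w \<oplus> y \<otimes> c 0 = \<zero>"
    using linear_endo_orbit_sum_Suc[OF L y c] Suc.prems(3) unfolding w_def by simp
  show ?case
  proof (cases "c 0 = \<zero>")
    case True
    then have "L w = L \<zero>"
      using Lw linear_endo_closed[OF L w] y by (simp add: linear_endo_zero[OF L])
    then have "w = \<zero>" using inj w by (auto dest: inj_onD)
    moreover have "\<exists>i\<le>n. c (Suc i) \<noteq> \<zero>"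
      using Suc.prems(2) True by (metis Suc_le_mono not0_implies_Suc)
    ultimately show ?thesis using c by (intro Suc.IH[of "c \<circ> Suc"]) (auto simp: w_def)
  qed (use linear_endo_image_smult[OF L w y _ _ Lw] c in auto)
qed

lemma injective_linear_endo_surj:
  assumes "finite J" "v \<in> J \<rightarrow> carrier S" "carrier S \<subseteq> span J v"
    and L: "linear_endo L" and inj: "inj_on L (carrier S)"
  shows "L ` carrier S = carrier S"
proof
  show "L ` carrier S \<subseteq> carrier S" using linear_endo_closed[OF L] by auto
  show "carrier S \<subseteq> L ` carrier S"
  proof
    fix y assume y: "y \<in> carrier S"
    have "\<forall>i\<in>{..card J}. (L ^^ i) y \<in> span J v"
      using assms(3) linear_endo_closed[OF linear_endo_funpow[OF L] y] by auto
    then obtain c where "\<forall>i\<in>{..card J}. c i \<in> K" "\<exists>i\<in>{..card J}. c i \<noteq> \<zero>"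
      "(\<Oplus>i\<in>{..card J}. (L ^^ i) y \<otimes> c i) = \<zero>"
      using span_dependent[OF assms(1,2), of "{..card J}" "\<lambda>i. (L ^^ i) y"] by auto
    then show "y \<in> L ` carrier S" using dependent_orbit_in_image[OF L inj y, of "card J" c] by auto
  qed
qed

end

section \<open>Twisted polynomials\<close>

locale division_subring = na_ring +
  fixes D :: "'a set"
  assumes assoc_division_subring: "assoc_division_subring S D"
begin

lemma D_carrier [intro, simp]: "a \<in> D \<Longrightarrow> a \<in> carrier S"
  using assoc_division_subring unfolding assoc_division_subring_def by auto

lemma D_zero [intro, simp]: "\<zero> \<in> D"
  and D_one [intro, simp]: "\<one> \<in> D"
  and one_not_zero [simp]: "\<one> \<noteq> \<zero>"
  and D_add [intro, simp]: "a \<in> D \<Longrightarrow> b \<in> D \<Longrightarrow> a \<oplus> b \<in> D"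
  and D_mult [intro, simp]: "a \<in> D \<Longrightarrow> b \<in> D \<Longrightarrow> a \<otimes> b \<in> D"
  and D_neg [intro, simp]: "a \<in> D \<Longrightarrow> \<ominus> a \<in> D"
  and D_assoc: "a \<in> D \<Longrightarrow> b \<in> D \<Longrightarrow> c \<in> D \<Longrightarrow> (a \<otimes> b) \<otimes> c = a \<otimes> (b \<otimes> c)"
  and D_inv: "a \<in> D \<Longrightarrow> a \<noteq> \<zero> \<Longrightarrow> \<exists>b\<in>D. a \<otimes> b = \<one> \<and> b \<otimes> a = \<one>"
  using assoc_division_subring unfolding assoc_division_subring_def by auto

lemma D_minus [intro, simp]: "a \<in> D \<Longrightarrow> b \<in> D \<Longrightarrow> a \<ominus> b \<in> D"
  by (simp add: a_minus_def)

lemma D_finsum [intro]: "f \<in> A \<rightarrow> D \<Longrightarrow> (\<Oplus>i\<in>A. f i) \<in> D"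
proof (induction A rule: infinite_finite_induct)
  case (insert a A)
  then show ?case by (subst finsum_insert) (auto simp: Pi_def)
qed auto

lemma D_no_zero_divisors: "a \<in> D \<Longrightarrow> b \<in> D \<Longrightarrow> a \<otimes> b = \<zero> \<Longrightarrow> a = \<zero> \<or> b = \<zero>"
  by (metis D_assoc D_carrier D_inv l_one r_null)

lemma D_cancel_left: "a \<in> D \<Longrightarrow> a \<noteq> \<zero> \<Longrightarrow> b \<in> D \<Longrightarrow> c \<in> D \<Longrightarrow> a \<otimes> b = a \<otimes> c \<Longrightarrow> b = c"
  by (metis D_assoc D_carrier D_inv l_one)

abbreviation F :: "'a set" where "F \<equiv> center_of S D"

lemma F_D [intro, simp]: "c \<in> F \<Longrightarrow> c \<in> D"
  and F_comm: "c \<in> F \<Longrightarrow> x \<in> D \<Longrightarrow> c \<otimes> x = x \<otimes> c"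
  and F_zero [intro, simp]: "\<zero> \<in> F"
  and F_one [intro, simp]: "\<one> \<in> F"
  unfolding center_of_def by auto

lemma F_add [intro, simp]: "c \<in> F \<Longrightarrow> e \<in> F \<Longrightarrow> c \<oplus> e \<in> F"
  and F_neg [intro, simp]: "c \<in> F \<Longrightarrow> \<ominus> c \<in> F"
  unfolding center_of_def by (auto simp: l_distr r_distr l_minus r_minus)

lemma F_mult [intro, simp]: "c \<in> F \<Longrightarrow> e \<in> F \<Longrightarrow> c \<otimes> e \<in> F"
proof -
  assume c: "c \<in> F" and e: "e \<in> F"
  have cD: "c \<in> D" and eD: "e \<in> D" using c e by auto
  have "(c \<otimes> e) \<otimes> x = x \<otimes> (c \<otimes> e)" if x: "x \<in> D" for x
  proof -
    have "(c \<otimes> e) \<otimes> x = c \<otimes> (e \<otimes> x)" using D_assoc[OF cD eD x] .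
    also have "\<dots> = c \<otimes> (x \<otimes> e)" using F_comm[OF e x] by simp
    also have "\<dots> = (c \<otimes> x) \<otimes> e" using D_assoc[OF cD x eD] by simp
    also have "\<dots> = (x \<otimes> c) \<otimes> e" using F_comm[OF c x] by simp
    also have "\<dots> = x \<otimes> (c \<otimes> e)" using D_assoc[OF x cD eD] .
    finally show ?thesis .
  qed
  then show ?thesis using cD eD unfolding center_of_def by auto
qed

lemma F_inv: "c \<in> F \<Longrightarrow> c \<noteq> \<zero> \<Longrightarrow> \<exists>e\<in>F. c \<otimes> e = \<one>"
proof -
  assume c: "c \<in> F" "c \<noteq> \<zero>"
  have cD: "c \<in> D" using c by auto
  obtain e where e: "e \<in> D" "c \<otimes> e = \<one>" "e \<otimes> c = \<one>" using D_inv[OF cD c(2)] by blast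
  have "e \<otimes> x = x \<otimes> e" if x: "x \<in> D" for x
  proof -
    have ex: "e \<otimes> x \<in> D" using e x by simp
    have "x \<otimes> e = ((e \<otimes> c) \<otimes> x) \<otimes> e" using e x by simp
    also have "(e \<otimes> c) \<otimes> x = e \<otimes> (c \<otimes> x)" using D_assoc[OF e(1) cD x] .
    also have "c \<otimes> x = x \<otimes> c" using F_comm[OF c(1) x] .
    also have "e \<otimes> (x \<otimes> c) = (e \<otimes> x) \<otimes> c" using D_assoc[OF e(1) x cD] by simp
    also have "((e \<otimes> x) \<otimes> c) \<otimes> e = (e \<otimes> x) \<otimes> (c \<otimes> e)" using D_assoc[OF ex cD e(1)] .
    also have "\<dots> = e \<otimes> x" using e ex by simp
    finally show ?thesis by simp
  qed
  then have "e \<in> F" using e unfolding center_of_def by auto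
  then show ?thesis using e by auto
qed

lemma F_shuffle:
  assumes "p \<in> D" "a \<in> F" "s \<in> D" "t \<in> D"
  shows "(p \<otimes> a) \<otimes> (s \<otimes> t) = (p \<otimes> s) \<otimes> (a \<otimes> t)"
proof -
  have aD: "a \<in> D" using assms by auto
  have "(p \<otimes> a) \<otimes> (s \<otimes> t) = p \<otimes> ((a \<otimes> s) \<otimes> t)" using assms aD by (simp add: D_assoc)
  also have "a \<otimes> s = s \<otimes> a" using F_comm assms by blast
  finally show ?thesis using assms aD by (simp add: D_assoc)
qed

end

locale twisted_poly = division_subring +
  fixes \<sigma> :: "'a \<Rightarrow> 'a"
  assumes sigma_closed [intro, simp]: "a \<in> D \<Longrightarrow> \<sigma> a \<in> D"
    and sigma_add: "a \<in> D \<Longrightarrow> b \<in> D \<Longrightarrow> \<sigma> (a \<oplus> b) = \<sigma> a \<oplus> \<sigma> b"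
    and sigma_mult: "a \<in> D \<Longrightarrow> b \<in> D \<Longrightarrow> \<sigma> (a \<otimes> b) = \<sigma> a \<otimes> \<sigma> b"
    and sigma_nonzero: "a \<in> D \<Longrightarrow> a \<noteq> \<zero> \<Longrightarrow> \<sigma> a \<noteq> \<zero>"
begin

lemma sigma_zero [simp]: "\<sigma> \<zero> = \<zero>"
  using sigma_add[of \<zero> \<zero>] D_carrier[OF sigma_closed[OF D_zero]] by simp

lemma sigma_one [simp]: "\<sigma> \<one> = \<one>"
proof -
  have "\<sigma> \<one> \<otimes> \<sigma> \<one> = \<sigma> \<one> \<otimes> \<one>" using sigma_mult[of \<one> \<one>] by simp
  then show ?thesis using D_cancel_left sigma_nonzero by (metis D_one D_zero one_not_zero sigma_closed)
qed

lemma sigma_neg: "a \<in> D \<Longrightarrow> \<sigma> (\<ominus> a) = \<ominus> \<sigma> a"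
proof -
  assume a: "a \<in> D"
  have "\<sigma> (\<ominus> a) \<oplus> \<sigma> a = \<zero>" using sigma_add[of "\<ominus> a" a] a by (simp add: l_neg)
  then show ?thesis using a by (simp add: add.inv_equality)
qed

lemma sigma_pow_closed [intro, simp]: "a \<in> D \<Longrightarrow> (\<sigma> ^^ k) a \<in> D"
  by (induction k) auto

lemma sigma_pow_zero [simp]: "(\<sigma> ^^ k) \<zero> = \<zero>"
  by (induction k) auto

lemma sigma_pow_one [simp]: "(\<sigma> ^^ k) \<one> = \<one>"
  by (induction k) auto

lemma sigma_pow_neg: "a \<in> D \<Longrightarrow> (\<sigma> ^^ k) (\<ominus> a) = \<ominus> (\<sigma> ^^ k) a"
  by (induction k) (auto simp: sigma_neg)

lemma sigma_pow_mult: "a \<in> D \<Longrightarrow> b \<in> D \<Longrightarrow> (\<sigma> ^^ k) (a \<otimes> b) = (\<sigma> ^^ k) a \<otimes> (\<sigma> ^^ k) b"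
  by (induction k) (auto simp: sigma_mult)

lemma sigma_pow_nonzero: "a \<in> D \<Longrightarrow> a \<noteq> \<zero> \<Longrightarrow> (\<sigma> ^^ k) a \<noteq> \<zero>"
  by (induction k) (auto simp: sigma_nonzero)

lemma sigma_pow_pow: "(\<sigma> ^^ i) ((\<sigma> ^^ j) a) = (\<sigma> ^^ (i + j)) a"
  by (simp add: funpow_add)

lemma tpolys_D: "p \<in> tpolys S D \<Longrightarrow> p i \<in> D"
  unfolding tpolys_def by auto

lemma tpolysI: "(\<And>i. p i \<in> D) \<Longrightarrow> (\<And>i. N \<le> i \<Longrightarrow> p i = \<zero>) \<Longrightarrow> p \<in> tpolys S D"
  unfolding tpolys_def by (auto intro: finite_subset[of _ "{..<N}"] simp: not_less[symmetric])

lemma tpolys_bound: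
  assumes "p \<in> tpolys S D"
  obtains N where "\<And>i. N \<le> i \<Longrightarrow> p i = \<zero>"
proof -
  have "finite {i. p i \<noteq> \<zero>}" using assms unfolding tpolys_def by auto
  then obtain N where "{i. p i \<noteq> \<zero>} \<subseteq> {..<N}" by (auto simp: finite_nat_set_iff_bounded)
  then have "\<And>i. N \<le> i \<Longrightarrow> p i = \<zero>" by (auto simp: subset_iff)
  then show thesis by (rule that)
qed

lemma tp_mult_D [intro, simp]:
  "(\<And>i. p i \<in> D) \<Longrightarrow> (\<And>i. q i \<in> D) \<Longrightarrow> tp_mult S \<sigma> p q n \<in> D"
  unfolding tp_mult_def by (intro D_finsum) auto

lemma tp_mult_eq_zero:
  assumes "\<And>i. p i \<in> D" "\<And>i. q i \<in> D"
    and "\<And>i. i \<le> n \<Longrightarrow> p i = \<zero> \<or> q (n - i) = \<zero>"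
  shows "tp_mult S \<sigma> p q n = \<zero>"
proof -
  have "p i \<otimes> (\<sigma> ^^ i) (q (n - i)) = \<zero>" if "i \<le> n" for i
    using assms(3)[OF that] assms(1,2) by (cases "p i = \<zero>") auto
  then have "tp_mult S \<sigma> p q n = (\<Oplus>i\<in>{..n}. \<zero>)"
    unfolding tp_mult_def using assms by (intro finsum_cong') auto
  then show ?thesis by (simp add: finsum_zero)
qed

lemma tp_mult_zero_left: "(\<And>i. q i \<in> D) \<Longrightarrow> tp_mult S \<sigma> (\<lambda>i. \<zero>) q = (\<lambda>i. \<zero>)"
  by (rule ext, rule tp_mult_eq_zero) auto

lemma tp_mult_zero_right: "(\<And>i. p i \<in> D) \<Longrightarrow> tp_mult S \<sigma> p (\<lambda>i. \<zero>) = (\<lambda>i. \<zero>)"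
  by (rule ext, rule tp_mult_eq_zero) auto

definition deg :: "(nat \<Rightarrow> 'a) \<Rightarrow> nat" where
  "deg p = Max {i. p i \<noteq> \<zero>}"

lemma deg_coeff:
  assumes p: "p \<in> tpolys S D" and nz: "p \<noteq> (\<lambda>i. \<zero>)"
  shows "p (deg p) \<noteq> \<zero>" "\<And>i. deg p < i \<Longrightarrow> p i = \<zero>"
proof -
  have fin: "finite {i. p i \<noteq> \<zero>}" using p unfolding tpolys_def by auto
  have ne: "{i. p i \<noteq> \<zero>} \<noteq> {}" using nz by auto
  show "p (deg p) \<noteq> \<zero>" unfolding deg_def using Max_in[OF fin ne] by auto
  show "\<And>i. deg p < i \<Longrightarrow> p i = \<zero>" unfolding deg_def using Max_ge[OF fin] by force
qed

lemma deg_eqI: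
  assumes "p N \<noteq> \<zero>" "\<And>i. N < i \<Longrightarrow> p i = \<zero>"
  shows "deg p = N"
proof -
  have "{i. p i \<noteq> \<zero>} \<subseteq> {..N}" using assms by (auto simp: not_less[symmetric])
  then have "finite {i. p i \<noteq> \<zero>}" by (rule finite_subset) auto
  then show ?thesis
    unfolding deg_def by (rule Max_eqI) (use assms in \<open>auto simp: not_less[symmetric]\<close>)
qed

lemma tp_mult_lead_coeff:
  assumes p: "p \<in> tpolys S D" "p \<noteq> (\<lambda>i. \<zero>)" and q: "q \<in> tpolys S D" "q \<noteq> (\<lambda>i. \<zero>)"
  shows "tp_mult S \<sigma> p q (deg p + deg q) = p (deg p) \<otimes> (\<sigma> ^^ deg p) (q (deg q))"
proof -
  note pD = tpolys_D[OF p(1)] and qD = tpolys_D[OF q(1)]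
  note dp = deg_coeff[OF p] and dq = deg_coeff[OF q]
  let ?N = "deg p" and ?M = "deg q"
  have "tp_mult S \<sigma> p q (?N + ?M)
      = (\<Oplus>i\<in>{..?N + ?M}. if i = ?N then p ?N \<otimes> (\<sigma> ^^ ?N) (q ?M) else \<zero>)"
    unfolding tp_mult_def
  proof (rule finsum_cong')
    fix i assume "i \<in> {..?N + ?M}"
    show "p i \<otimes> (\<sigma> ^^ i) (q (?N + ?M - i)) = (if i = ?N then p ?N \<otimes> (\<sigma> ^^ ?N) (q ?M) else \<zero>)"
    proof (cases "i < ?N")
      case True
      then have "?M < ?N + ?M - i" by auto
      then show ?thesis using dq(2) pD True by simp
    next
      case False
      then show ?thesis using dp(2)[of i] qD by (cases "i = ?N") auto
    qed
  qed (use pD qD in auto)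
  also have "\<dots> = p ?N \<otimes> (\<sigma> ^^ ?N) (q ?M)" using pD qD by (intro finsum_delta) auto
  finally show ?thesis .
qed

lemma deg_tp_mult:
  assumes p: "p \<in> tpolys S D" "p \<noteq> (\<lambda>i. \<zero>)" and q: "q \<in> tpolys S D" "q \<noteq> (\<lambda>i. \<zero>)"
  shows "deg (tp_mult S \<sigma> p q) = deg p + deg q"
proof (rule deg_eqI)
  note pD = tpolys_D[OF p(1)] and qD = tpolys_D[OF q(1)]
  note dp = deg_coeff[OF p] and dq = deg_coeff[OF q]
  show "tp_mult S \<sigma> p q (deg p + deg q) \<noteq> \<zero>"
    unfolding tp_mult_lead_coeff[OF p q]
    using D_no_zero_divisors pD qD dp(1) dq(1) sigma_pow_nonzero by blast
  show "tp_mult S \<sigma> p q n = \<zero>" if "deg p + deg q < n" for n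
  proof (rule tp_mult_eq_zero)
    show "p i = \<zero> \<or> q (n - i) = \<zero>" for i
      using dp(2)[of i] dq(2)[of "n - i"] that by (cases "deg p < i") auto
  qed (use pD qD in auto)
qed

lemma tp_one_nonzero: "tp_one S \<noteq> (\<lambda>i. \<zero>)"
  unfolding tp_one_def by (metis one_not_zero)

lemma deg_tp_one: "deg (tp_one S) = 0"
  by (rule deg_eqI) (auto simp: tp_one_def)

lemma tp_unit_deg:
  assumes "tp_unit S D \<sigma> p"
  shows "deg p = 0"
proof -
  obtain q where p: "p \<in> tpolys S D" and q: "q \<in> tpolys S D" and pq: "tp_mult S \<sigma> p q = tp_one S"
    using assms unfolding tp_unit_def by auto
  have "p \<noteq> (\<lambda>i. \<zero>)" using pq tp_mult_zero_left[OF tpolys_D[OF q]] tp_one_nonzero by auto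
  moreover have "q \<noteq> (\<lambda>i. \<zero>)" using pq tp_mult_zero_right[OF tpolys_D[OF p]] tp_one_nonzero by auto
  ultimately have "deg p + deg q = 0" using deg_tp_mult p q pq deg_tp_one by metis
  then show ?thesis by simp
qed

lemma tp_mult_const_left:
  assumes "\<And>i. u i \<in> D" "\<And>i. 0 < i \<Longrightarrow> u i = \<zero>" "\<And>i. v i \<in> D"
  shows "tp_mult S \<sigma> u v = (\<lambda>n. u 0 \<otimes> v n)"
proof
  fix n
  have "tp_mult S \<sigma> u v n = (\<Oplus>i\<in>{..n}. if i = 0 then u 0 \<otimes> v n else \<zero>)"
    unfolding tp_mult_def by (rule finsum_cong') (use assms in auto)
  also have "\<dots> = u 0 \<otimes> v n" using assms by (intro finsum_delta) auto
  finally show "tp_mult S \<sigma> u v n = u 0 \<otimes> v n" .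
qed

lemma deg_zero_tp_unit:
  assumes p: "p \<in> tpolys S D" "p \<noteq> (\<lambda>i. \<zero>)" and deg: "deg p = 0"
  shows "tp_unit S D \<sigma> p"
proof -
  note pD = tpolys_D[OF p(1)]
  have p0: "p 0 \<noteq> \<zero>" and pz: "\<And>i. 0 < i \<Longrightarrow> p i = \<zero>" using deg_coeff[OF p] deg by auto
  obtain b where b: "b \<in> D" "p 0 \<otimes> b = \<one>" "b \<otimes> p 0 = \<one>" using D_inv[OF pD p0] by blast
  define q :: "nat \<Rightarrow> 'a" where "q i = (if i = 0 then b else \<zero>)" for i
  have q: "q \<in> tpolys S D" by (rule tpolysI[where N = 1]) (auto simp: q_def b)
  have "tp_mult S \<sigma> p q = tp_one S"
    using b pD by (subst tp_mult_const_left) (auto simp: pz q_def tp_one_def)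
  moreover have "tp_mult S \<sigma> q p = tp_one S"
    using b pD by (subst tp_mult_const_left) (auto simp: pz q_def tp_one_def)
  ultimately show ?thesis unfolding tp_unit_def using p q by auto
qed

end

section \<open>The algebra S_f\<close>

locale twisted_quotient = twisted_poly +
  fixes m :: nat and d :: 'a
  assumes m_pos: "0 < m" and d_in [intro, simp]: "d \<in> D"
    and sigma_order: "a \<in> D \<Longrightarrow> (\<sigma> ^^ m) a = a"
begin

abbreviation f :: "nat \<Rightarrow> 'a" where "f \<equiv> tp_f S m d"

abbreviation SF :: "(nat \<Rightarrow> 'a) ring" where "SF \<equiv> Sf S D \<sigma> d m"

lemma f_D [intro, simp]: "f n \<in> D"
  unfolding tp_f_def by auto

lemma sf_D: "p \<in> sf_carrier S D m \<Longrightarrow> p i \<in> D"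
  unfolding sf_carrier_def tpolys_def by auto

lemma sf_zero: "p \<in> sf_carrier S D m \<Longrightarrow> m \<le> i \<Longrightarrow> p i = \<zero>"
  unfolding sf_carrier_def by auto

lemma sf_carrierI: "(\<And>i. p i \<in> D) \<Longrightarrow> (\<And>i. m \<le> i \<Longrightarrow> p i = \<zero>) \<Longrightarrow> p \<in> sf_carrier S D m"
  unfolding sf_carrier_def by (auto intro: tpolysI)

lemma sigma_pow_periodic: "a \<in> D \<Longrightarrow> (\<sigma> ^^ (k + m)) a = (\<sigma> ^^ k) a"
  by (simp add: funpow_add sigma_order)

lemma tp_mult_f:
  assumes q: "\<And>i. q i \<in> D"
  shows "tp_mult S \<sigma> q f n = (if m \<le> n then q (n - m) else \<zero>) \<oplus> \<ominus> (q n \<otimes> (\<sigma> ^^ n) d)"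
proof -
  let ?a = "\<lambda>i. if i = n - m \<and> m \<le> n then q (n - m) else \<zero>"
  let ?b = "\<lambda>i. if i = n then \<ominus> (q n \<otimes> (\<sigma> ^^ n) d) else \<zero>"
  have "q i \<otimes> (\<sigma> ^^ i) (f (n - i)) = ?a i \<oplus> ?b i" if "i \<le> n" for i
  proof -
    have "i = n \<Longrightarrow> n - i \<noteq> m" using m_pos by auto
    then show ?thesis using that q by (auto simp: tp_f_def sigma_pow_neg r_minus)
  qed
  then have "tp_mult S \<sigma> q f n = (\<Oplus>i\<in>{..n}. ?a i \<oplus> ?b i)"
    unfolding tp_mult_def using q by (intro finsum_cong') auto
  also have "\<dots> = (\<Oplus>i\<in>{..n}. ?a i) \<oplus> (\<Oplus>i\<in>{..n}. ?b i)"
    using q by (intro finsum_addf) auto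
  also have "(\<Oplus>i\<in>{..n}. ?b i) = \<ominus> (q n \<otimes> (\<sigma> ^^ n) d)"
    using q by (intro finsum_delta) auto
  also have "(\<Oplus>i\<in>{..n}. ?a i) = (if m \<le> n then q (n - m) else \<zero>)"
    using q by (cases "m \<le> n") (simp_all add: finsum_delta finsum_zero)
  finally show ?thesis .
qed

lemma tp_mult_f_cancel:
  assumes q: "q \<in> tpolys S D" and q': "q' \<in> tpolys S D"
    and eq: "\<And>n. m \<le> n \<Longrightarrow> tp_mult S \<sigma> q f n = tp_mult S \<sigma> q' f n"
  shows "q = q'"
proof
  note qD = tpolys_D[OF q] and q'D = tpolys_D[OF q']
  obtain N1 where N1: "\<And>i. N1 \<le> i \<Longrightarrow> q i = \<zero>" using tpolys_bound q by blast
  obtain N2 where N2: "\<And>i. N2 \<le> i \<Longrightarrow> q' i = \<zero>" using tpolys_bound q' by blast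
  text \<open>Since f is monic of degree m, the coefficients of degree i + m determine q from the top down.\<close>
  have step: "q i = q' i" if "q (i + m) = q' (i + m)" for i
  proof -
    let ?c = "\<ominus> (q (i + m) \<otimes> (\<sigma> ^^ (i + m)) d)"
    have "q i \<oplus> ?c = q' i \<oplus> ?c"
      using eq[of "i + m"] tp_mult_f[of q "i + m"] tp_mult_f[of q' "i + m"] qD q'D that by simp
    then show ?thesis using qD q'D by simp
  qed
  show "q i = q' i" for i
  proof (induction "max N1 N2 - i" arbitrary: i rule: less_induct)
    case less
    show ?case
    proof (cases "max N1 N2 \<le> i")
      case False
      then have "max N1 N2 - (i + m) < max N1 N2 - i" using m_pos by auto
      then show ?thesis using less step by blast
    qed (use N1 N2 in simp)
  qed
qed

lemma right_rem_unique:
  assumes r: "r \<in> sf_carrier S D m" and r': "r' \<in> sf_carrier S D m"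
    and q: "q \<in> tpolys S D" and q': "q' \<in> tpolys S D"
    and eq: "tp_add S (tp_mult S \<sigma> q f) r = tp_add S (tp_mult S \<sigma> q' f) r'"
  shows "r = r'"
proof
  fix n
  have coeff: "tp_mult S \<sigma> q f n \<oplus> r n = tp_mult S \<sigma> q' f n \<oplus> r' n" for n
    using fun_cong[OF eq, of n] unfolding tp_add_def by simp
  have "q = q'"
  proof (rule tp_mult_f_cancel[OF q q'])
    show "tp_mult S \<sigma> q f k = tp_mult S \<sigma> q' f k" if "m \<le> k" for k
      using coeff[of k] sf_zero[OF r that] sf_zero[OF r' that] tpolys_D[OF q] tpolys_D[OF q'] by simp
  qed
  then have "r n \<oplus> tp_mult S \<sigma> q f n = r' n \<oplus> tp_mult S \<sigma> q f n"
    using coeff[of n] tpolys_D[OF q] sf_D[OF r] sf_D[OF r'] by (simp add: a_comm)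
  then show "r n = r' n" using tpolys_D[OF q] sf_D[OF r] sf_D[OF r'] by simp
qed

lemma right_rem_eq:
  assumes "r \<in> sf_carrier S D m" "q \<in> tpolys S D" "g = tp_add S (tp_mult S \<sigma> q f) r"
  shows "right_rem S D \<sigma> m f g = r"
  unfolding right_rem_def using assms right_rem_unique by (intro the_equality) blast+

text \<open>Reduction of a polynomial of degree below 2m modulo f: the coefficient of
  t^(n+m) is moved to t^n, since t^(n+m) = t^n d = \<sigma>^n(d) t^n modulo f.\<close>

definition reduce :: "(nat \<Rightarrow> 'a) \<Rightarrow> nat \<Rightarrow> 'a" where
  "reduce g n = (if n < m then g n \<oplus> g (n + m) \<otimes> (\<sigma> ^^ n) d else \<zero>)"

lemma reduce_sf: "(\<And>n. g n \<in> D) \<Longrightarrow> reduce g \<in> sf_carrier S D m"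
  by (rule sf_carrierI) (auto simp: reduce_def)

lemma tp_mult_sf_high:
  assumes p: "p \<in> sf_carrier S D m" and q: "q \<in> sf_carrier S D m" and n: "2 * m \<le> Suc n"
  shows "tp_mult S \<sigma> p q n = \<zero>"
proof (rule tp_mult_eq_zero)
  show "p i = \<zero> \<or> q (n - i) = \<zero>" for i
    using sf_zero[OF p, of i] sf_zero[OF q, of "n - i"] n by (cases "m \<le> i") auto
qed (use p q sf_D in auto)

lemma Sf_mult:
  assumes p: "p \<in> sf_carrier S D m" and q: "q \<in> sf_carrier S D m"
  shows "p \<otimes>\<^bsub>SF\<^esub> q = reduce (tp_mult S \<sigma> p q)"
proof -
  let ?g = "tp_mult S \<sigma> p q"
  have gD: "\<And>n. ?g n \<in> D" using sf_D p q by auto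
  define Q where "Q i = ?g (i + m)" for i
  have QD: "\<And>i. Q i \<in> D" unfolding Q_def using gD by auto
  have Q: "Q \<in> tpolys S D"
    by (rule tpolysI[where N = m]) (use QD tp_mult_sf_high[OF p q] in \<open>auto simp: Q_def\<close>)
  have dec: "?g = tp_add S (tp_mult S \<sigma> Q f) (reduce ?g)"
  proof (rule ext)
    fix n
    show "?g n = tp_add S (tp_mult S \<sigma> Q f) (reduce ?g) n"
    proof (cases "m \<le> n")
      case True
      then have "Q n = \<zero>" unfolding Q_def using tp_mult_sf_high[OF p q] by simp
      then show ?thesis using True gD
        unfolding tp_add_def tp_mult_f[OF QD] reduce_def by (simp add: Q_def)
    next
      case False
      let ?a = "?g (n + m) \<otimes> (\<sigma> ^^ n) d"
      have "\<zero> \<oplus> \<ominus> ?a \<oplus> (?g n \<oplus> ?a) = ?g n"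
        using gD by (simp add: a_lcomm[of "\<ominus> ?a"] l_neg)
      then show ?thesis using False
        unfolding tp_add_def tp_mult_f[OF QD] reduce_def by (simp add: Q_def)
    qed
  qed
  have "reduce ?g \<in> sf_carrier S D m" using reduce_sf gD by blast
  then show ?thesis unfolding Sf_def using right_rem_eq[OF _ Q dec] by simp
qed

lemma SF_carrier [simp]: "carrier SF = sf_carrier S D m"
  and SF_one [simp]: "\<one>\<^bsub>SF\<^esub> = tp_one S"
  and SF_zero [simp]: "\<zero>\<^bsub>SF\<^esub> = (\<lambda>i. \<zero>)"
  and SF_add [simp]: "x \<oplus>\<^bsub>SF\<^esub> y = tp_add S x y"
  unfolding Sf_def by simp_all

lemma tp_one_sf [intro, simp]: "tp_one S \<in> sf_carrier S D m"
  by (rule sf_carrierI) (use m_pos in \<open>auto simp: tp_one_def\<close>)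

lemma zero_sf [intro, simp]: "(\<lambda>i. \<zero>) \<in> sf_carrier S D m"
  by (rule sf_carrierI) auto

lemma tp_add_sf [intro, simp]:
  "p \<in> sf_carrier S D m \<Longrightarrow> q \<in> sf_carrier S D m \<Longrightarrow> tp_add S p q \<in> sf_carrier S D m"
  by (rule sf_carrierI) (auto simp: tp_add_def sf_D sf_zero)

lemma SF_mult_sf [intro, simp]:
  "p \<in> sf_carrier S D m \<Longrightarrow> q \<in> sf_carrier S D m \<Longrightarrow> p \<otimes>\<^bsub>SF\<^esub> q \<in> sf_carrier S D m"
  using Sf_mult reduce_sf sf_D by simp

lemma f_tpolys: "f \<in> tpolys S D"
  by (rule tpolysI[where N = "Suc m"]) (auto simp: tp_f_def)

lemma f_nonzero: "f \<noteq> (\<lambda>i. \<zero>)"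
  unfolding tp_f_def by (metis one_not_zero)

lemma deg_f: "deg f = m"
  by (rule deg_eqI) (auto simp: tp_f_def)

lemma reduce_f: "reduce f = (\<lambda>i. \<zero>)"
  using m_pos by (auto simp: reduce_def tp_f_def l_neg)

lemma reducible_imp_zero_divisors:
  assumes "\<not> tp_irreducible S D \<sigma> f"
  obtains g h where "g \<in> sf_carrier S D m" "h \<in> sf_carrier S D m"
    "g \<noteq> (\<lambda>i. \<zero>)" "h \<noteq> (\<lambda>i. \<zero>)" "g \<otimes>\<^bsub>SF\<^esub> h = (\<lambda>i. \<zero>)"
proof -
  have "\<not> tp_unit S D \<sigma> f" using tp_unit_deg deg_f m_pos by auto
  then obtain g h where g: "g \<in> tpolys S D" and h: "h \<in> tpolys S D"
    and units: "\<not> tp_unit S D \<sigma> g" "\<not> tp_unit S D \<sigma> h" and fgh: "f = tp_mult S \<sigma> g h"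
    using assms f_tpolys unfolding tp_irreducible_def by blast
  have g0: "g \<noteq> (\<lambda>i. \<zero>)" using fgh f_nonzero tp_mult_zero_left[OF tpolys_D[OF h]] by auto
  have h0: "h \<noteq> (\<lambda>i. \<zero>)" using fgh f_nonzero tp_mult_zero_right[OF tpolys_D[OF g]] by auto
  have degs: "deg g + deg h = m" using deg_tp_mult[OF g g0 h h0] fgh deg_f by simp
  have "deg g \<noteq> 0" "deg h \<noteq> 0" using deg_zero_tp_unit g g0 h h0 units by auto
  then have "deg g < m" "deg h < m" using degs by auto
  then have gs: "g \<in> sf_carrier S D m" and hs: "h \<in> sf_carrier S D m"
    using deg_coeff(2)[OF g g0] deg_coeff(2)[OF h h0] tpolys_D[OF g] tpolys_D[OF h]
    by (auto intro!: sf_carrierI)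
  have "g \<otimes>\<^bsub>SF\<^esub> h = (\<lambda>i. \<zero>)" using Sf_mult[OF gs hs] fgh reduce_f by simp
  then show thesis using that gs hs g0 h0 by blast
qed

end

context twisted_quotient
begin

lemma sigma_surj: "x \<in> D \<Longrightarrow> \<exists>y\<in>D. x = \<sigma> y"
proof -
  assume x: "x \<in> D"
  have "\<sigma> ((\<sigma> ^^ (m - 1)) x) = (\<sigma> ^^ m) x"
    using m_pos by (metis Suc_diff_1 comp_apply funpow.simps(2))
  then show ?thesis using x sigma_order by (metis sigma_pow_closed)
qed

lemma sigma_center [intro, simp]: "c \<in> F \<Longrightarrow> \<sigma> c \<in> F"
proof -
  assume c: "c \<in> F"
  have "\<sigma> c \<otimes> x = x \<otimes> \<sigma> c" if x: "x \<in> D" for x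
  proof -
    obtain y where y: "y \<in> D" "x = \<sigma> y" using sigma_surj x by blast
    have "\<sigma> c \<otimes> \<sigma> y = \<sigma> (c \<otimes> y)" using sigma_mult c y by auto
    also have "\<dots> = \<sigma> (y \<otimes> c)" using F_comm[OF c y(1)] by simp
    also have "\<dots> = \<sigma> y \<otimes> \<sigma> c" using sigma_mult c y by auto
    finally show ?thesis using y by simp
  qed
  then show ?thesis using c unfolding center_of_def by auto
qed

lemma sigma_pow_center [intro, simp]: "c \<in> F \<Longrightarrow> (\<sigma> ^^ k) c \<in> F"
  by (induction k) auto

text \<open>Multiplying the coefficients by central elements compatible with \<sigma> commutes with
  multiplication in S_f; both the right nucleus and the automorphisms below are of this form.\<close>

lemma tp_mult_twist:
  assumes p: "\<And>i. p i \<in> D" and q: "\<And>i. q i \<in> D" and a: "\<And>i. a i \<in> F" and b: "\<And>i. b i \<in> D"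
    and e: "\<And>i j. a i \<otimes> (\<sigma> ^^ i) (b j) = e (i + j)"
  shows "tp_mult S \<sigma> (\<lambda>i. p i \<otimes> a i) (\<lambda>j. q j \<otimes> b j) n = tp_mult S \<sigma> p q n \<otimes> e n"
proof -
  have eD: "e n \<in> D" using e[of 0 n] a b by (metis D_mult F_D sigma_pow_closed add_0)
  have "tp_mult S \<sigma> (\<lambda>i. p i \<otimes> a i) (\<lambda>j. q j \<otimes> b j) n
      = (\<Oplus>i\<in>{..n}. (p i \<otimes> (\<sigma> ^^ i) (q (n - i))) \<otimes> e n)"
    unfolding tp_mult_def
  proof (rule finsum_cong')
    fix i assume "i \<in> {..n}"
    then have "a i \<otimes> (\<sigma> ^^ i) (b (n - i)) = e n" using e[of i "n - i"] by simp
    then show "(p i \<otimes> a i) \<otimes> (\<sigma> ^^ i) (q (n - i) \<otimes> b (n - i)) = (p i \<otimes> (\<sigma> ^^ i) (q (n - i))) \<otimes> e n"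
      using F_shuffle[of "p i" "a i" "(\<sigma> ^^ i) (q (n - i))" "(\<sigma> ^^ i) (b (n - i))"] p q a b
      by (simp add: sigma_pow_mult)
  qed (use p q eD in auto)
  also have "\<dots> = tp_mult S \<sigma> p q n \<otimes> e n"
    unfolding tp_mult_def using p q eD by (subst finsum_rdistr) auto
  finally show ?thesis .
qed

lemma reduce_twist:
  assumes g: "\<And>n. g n \<in> D" and e: "\<And>n. e n \<in> F" "\<And>n. e (n + m) = e n"
  shows "reduce (\<lambda>n. g n \<otimes> e n) = (\<lambda>n. reduce g n \<otimes> e n)"
proof
  fix n
  show "reduce (\<lambda>n. g n \<otimes> e n) n = reduce g n \<otimes> e n"
  proof (cases "n < m")
    case True
    let ?d = "(\<sigma> ^^ n) d"
    have "(g (n + m) \<otimes> e n) \<otimes> ?d = (g (n + m) \<otimes> ?d) \<otimes> e n"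
      using F_shuffle[of "g (n + m)" "e n" ?d \<one>] g e by simp
    then show ?thesis using True g e by (simp add: reduce_def l_distr)
  qed (use e in \<open>simp add: reduce_def\<close>)
qed

lemma twist_sf: "p \<in> sf_carrier S D m \<Longrightarrow> (\<And>i. a i \<in> D) \<Longrightarrow> (\<lambda>i. p i \<otimes> a i) \<in> sf_carrier S D m"
  by (rule sf_carrierI) (auto simp: sf_D sf_zero)

lemma Sf_mult_twist:
  assumes p: "p \<in> sf_carrier S D m" and q: "q \<in> sf_carrier S D m"
    and a: "\<And>i. a i \<in> F" and b: "\<And>i. b i \<in> D"
    and e: "\<And>i j. a i \<otimes> (\<sigma> ^^ i) (b j) = e (i + j)" "\<And>n. e n \<in> F" "\<And>n. e (n + m) = e n"
  shows "(\<lambda>i. p i \<otimes> a i) \<otimes>\<^bsub>SF\<^esub> (\<lambda>j. q j \<otimes> b j) = (\<lambda>n. (p \<otimes>\<^bsub>SF\<^esub> q) n \<otimes> e n)"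
proof -
  have aD: "\<And>i. a i \<in> D" using a by auto
  have "(\<lambda>i. p i \<otimes> a i) \<otimes>\<^bsub>SF\<^esub> (\<lambda>j. q j \<otimes> b j)
      = reduce (tp_mult S \<sigma> (\<lambda>i. p i \<otimes> a i) (\<lambda>j. q j \<otimes> b j))"
    by (rule Sf_mult[OF twist_sf[OF p aD] twist_sf[OF q b]])
  also have "tp_mult S \<sigma> (\<lambda>i. p i \<otimes> a i) (\<lambda>j. q j \<otimes> b j) = (\<lambda>n. tp_mult S \<sigma> p q n \<otimes> e n)"
    using tp_mult_twist[OF _ _ a b e(1)] p q sf_D by auto
  also have "reduce (\<lambda>n. tp_mult S \<sigma> p q n \<otimes> e n) = (\<lambda>n. (p \<otimes>\<^bsub>SF\<^esub> q) n \<otimes> e n)"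
    using reduce_twist[of "tp_mult S \<sigma> p q" e] e(2,3) Sf_mult[OF p q] p q by (simp add: sf_D)
  finally show ?thesis .
qed

definition tp_const :: "'a \<Rightarrow> nat \<Rightarrow> 'a" where
  "tp_const c = (\<lambda>i. if i = 0 then c else \<zero>)"

lemma tp_const_sf [intro, simp]: "c \<in> D \<Longrightarrow> tp_const c \<in> sf_carrier S D m"
  by (rule sf_carrierI) (use m_pos in \<open>auto simp: tp_const_def\<close>)

lemma Sf_mult_const:
  assumes u: "u \<in> sf_carrier S D m" and c: "c \<in> D"
  shows "u \<otimes>\<^bsub>SF\<^esub> tp_const c = (\<lambda>n. u n \<otimes> (\<sigma> ^^ n) c)"
proof -
  have uD: "\<And>i. u i \<in> D" using u sf_D by auto
  have "tp_mult S \<sigma> u (tp_const c) n = u n \<otimes> (\<sigma> ^^ n) c" for n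
  proof -
    have "tp_mult S \<sigma> u (tp_const c) n = (\<Oplus>i\<in>{..n}. if i = n then u n \<otimes> (\<sigma> ^^ n) c else \<zero>)"
      unfolding tp_mult_def tp_const_def by (rule finsum_cong') (use uD c in auto)
    also have "\<dots> = u n \<otimes> (\<sigma> ^^ n) c" using uD c by (intro finsum_delta) auto
    finally show ?thesis .
  qed
  then show ?thesis
    using Sf_mult[OF u tp_const_sf[OF c]] sf_zero[OF u] uD c by (auto simp: reduce_def)
qed

lemma Sf_assoc_center:
  assumes p: "p \<in> sf_carrier S D m" and q: "q \<in> sf_carrier S D m" and c: "c \<in> F"
  shows "(p \<otimes>\<^bsub>SF\<^esub> q) \<otimes>\<^bsub>SF\<^esub> tp_const c = p \<otimes>\<^bsub>SF\<^esub> (q \<otimes>\<^bsub>SF\<^esub> tp_const c)"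
proof -
  have cD: "c \<in> D" using c by auto
  have "p \<otimes>\<^bsub>SF\<^esub> (q \<otimes>\<^bsub>SF\<^esub> tp_const c) = (\<lambda>i. p i \<otimes> \<one>) \<otimes>\<^bsub>SF\<^esub> (\<lambda>j. q j \<otimes> (\<sigma> ^^ j) c)"
    using Sf_mult_const[OF q cD] p by (simp add: sf_D)
  also have "\<dots> = (\<lambda>n. (p \<otimes>\<^bsub>SF\<^esub> q) n \<otimes> (\<sigma> ^^ n) c)"
    using c by (intro Sf_mult_twist[OF p q]) (auto simp: sigma_pow_pow sigma_pow_periodic)
  also have "\<dots> = (p \<otimes>\<^bsub>SF\<^esub> q) \<otimes>\<^bsub>SF\<^esub> tp_const c"
    using Sf_mult_const[OF SF_mult_sf[OF p q] cD] by simp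
  finally show ?thesis by simp
qed

end

locale twisted_quotient_root = twisted_quotient +
  fixes \<omega> :: 'a
  assumes omega_center: "\<omega> \<in> F" and omega_fixed: "\<sigma> \<omega> = \<omega>"
    and omega_pow_m: "npow S \<omega> m = \<one>"
    and omega_primitive: "0 < k \<Longrightarrow> k < m \<Longrightarrow> npow S \<omega> k \<noteq> \<one>"
begin

abbreviation W :: "nat \<Rightarrow> 'a" where "W k \<equiv> npow S \<omega> k"

lemma W_center [intro, simp]: "W k \<in> F"
  by (induction k) (use omega_center in auto)

lemma W_add: "W (a + b) = W a \<otimes> W b"
proof (induction a)
  case (Suc a)
  then show ?case using D_assoc[of \<omega> "W a" "W b"] omega_center by auto
qed simp

lemma W_mult_m: "W (m * q) = \<one>"
  by (induction q) (simp_all add: W_add omega_pow_m)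

lemma W_mod: "W k = W (k mod m)"
  using W_add[of "m * (k div m)" "k mod m"] W_mult_m by simp

lemma W_periodic: "W (k * (n + m)) = W (k * n)"
  using W_mod[of "k * (n + m)"] W_mod[of "k * n"] by (simp add: algebra_simps)

lemma sigma_pow_W [simp]: "(\<sigma> ^^ i) (W k) = W k"
proof -
  have "\<sigma> (W k) = W k" for k
    by (induction k) (use sigma_mult omega_center omega_fixed in auto)
  then show ?thesis by (induction i) auto
qed

lemma W_nonzero: "W k \<noteq> \<zero>"
proof
  assume "W k = \<zero>"
  then have "W (k + (m * k - k)) = \<zero>" using W_add by simp
  moreover have "k + (m * k - k) = m * k" using m_pos by simp
  ultimately show False using W_mult_m[of k] one_not_zero by simp
qed

lemma W_inj: "k < m \<Longrightarrow> l < m \<Longrightarrow> W k = W l \<Longrightarrow> k = l"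
proof -
  have "k = l" if kl: "k < l" "l < m" "W k = W l" for k l
  proof -
    have "W k \<otimes> W (l - k) = W k \<otimes> \<one>" using W_add[of k "l - k"] kl by simp
    then have "W (l - k) = \<one>" using D_cancel_left[of "W k"] W_nonzero by simp
    then show ?thesis using omega_primitive[of "l - k"] kl by auto
  qed
  then show "k < m \<Longrightarrow> l < m \<Longrightarrow> W k = W l \<Longrightarrow> k = l"
    by (metis linorder_neqE_nat)
qed

definition root_twist :: "nat \<Rightarrow> (nat \<Rightarrow> 'a) \<Rightarrow> nat \<Rightarrow> 'a" where
  "root_twist k p = (\<lambda>i. p i \<otimes> W (k * i))"

lemma root_twist_sf [intro, simp]: "p \<in> sf_carrier S D m \<Longrightarrow> root_twist k p \<in> sf_carrier S D m"
  unfolding root_twist_def by (rule twist_sf) auto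

lemma root_twist_add:
  "p \<in> sf_carrier S D m \<Longrightarrow> q \<in> sf_carrier S D m \<Longrightarrow>
    root_twist k (tp_add S p q) = tp_add S (root_twist k p) (root_twist k q)"
  unfolding root_twist_def tp_add_def by (auto simp: l_distr sf_D)

lemma root_twist_mult:
  assumes p: "p \<in> sf_carrier S D m" and q: "q \<in> sf_carrier S D m"
  shows "root_twist k (p \<otimes>\<^bsub>SF\<^esub> q) = root_twist k p \<otimes>\<^bsub>SF\<^esub> root_twist k q"
  unfolding root_twist_def
proof (rule Sf_mult_twist[OF p q, symmetric])
  show "W (k * i) \<otimes> (\<sigma> ^^ i) (W (k * j)) = W (k * (i + j))" for i j
    by (simp add: W_add add_mult_distrib2)
  show "W (k * (n + m)) = W (k * n)" for n by (rule W_periodic)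
qed auto

lemma root_twist_root_twist:
  "p \<in> sf_carrier S D m \<Longrightarrow> root_twist k (root_twist j p) = root_twist (k + j) p"
  unfolding root_twist_def
  by (auto simp: D_assoc sf_D W_add[symmetric] algebra_simps)

lemma root_twist_mod: "root_twist k = root_twist (k mod m)"
  unfolding root_twist_def by (metis W_mod mod_mult_left_eq)

lemma root_twist_0: "p \<in> sf_carrier S D m \<Longrightarrow> root_twist 0 p = p"
  unfolding root_twist_def using sf_D by auto

lemma root_twist_inverse:
  assumes "p \<in> sf_carrier S D m"
  shows "root_twist (m * k - k) (root_twist k p) = p" "root_twist k (root_twist (m * k - k) p) = p"
proof -
  have p: "root_twist (m * k) p = p" using root_twist_mod[of "m * k"] root_twist_0[OF assms] by simp
  have e: "m * k - k + k = m * k" "k + (m * k - k) = m * k" using m_pos by simp_all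
  show "root_twist (m * k - k) (root_twist k p) = p" "root_twist k (root_twist (m * k - k) p) = p"
    by (simp_all only: root_twist_root_twist[OF assms] e p)
qed

lemma root_twist_bij: "bij_betw (root_twist k) (sf_carrier S D m) (sf_carrier S D m)"
  by (rule bij_betw_byWitness[where f' = "root_twist (m * k - k)"]) (auto simp: root_twist_inverse)

lemma root_twist_one: "root_twist k (tp_one S) = tp_one S"
  unfolding root_twist_def tp_one_def by auto

lemma root_twist_iso: "na_iso SF SF (root_twist k)"
  unfolding na_iso_def using root_twist_bij root_twist_add root_twist_mult root_twist_one by simp

lemma root_twist_const: "a \<in> D \<Longrightarrow> root_twist k (tp_const a) = tp_const a"
  unfolding root_twist_def tp_const_def by auto

lemma root_twist_monomial:
  "root_twist k (\<lambda>i. if i = 1 then \<one> else \<zero>) = (\<lambda>i. if i = 1 then W k else \<zero>)"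
  unfolding root_twist_def by auto

end

section \<open>Rings with a twisted power basis\<close>

locale power_basis = division_subring +
  fixes \<sigma> :: "'a \<Rightarrow> 'a" and m :: nat and d t :: 'a
  assumes free: "free_left_module S D m"
    and t_in [intro, simp]: "t \<in> carrier S"
    and basis: "left_basis S D (npow S t) m"
    and basis_assoc: "\<forall>a\<in>D. \<forall>b\<in>D. \<forall>c\<in>D. \<forall>i j k. i + j < m \<and> k < m \<longrightarrow>
      associator S (a \<otimes> npow S t i) (b \<otimes> npow S t j) (c \<otimes> npow S t k) = \<zero>"
    and d_D: "d \<in> D" and t_pow_m: "npow S t m = d"
    and sigma_maps: "\<forall>a\<in>D. \<sigma> a \<in> D" and sigma_map_zero: "\<sigma> \<zero> = \<zero>"
    and t_commute: "\<forall>a\<in>D. a \<noteq> \<zero> \<longrightarrow> \<sigma> a \<noteq> \<zero> \<and> t \<otimes> a = \<sigma> a \<otimes> t"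
    and sigma_period: "\<forall>a\<in>D. (\<sigma> ^^ m) a = a"
begin

abbreviation T :: "nat \<Rightarrow> 'a" where "T i \<equiv> npow S t i"

lemma T_closed [intro, simp]: "T i \<in> carrier S"
  by (induction i) auto

lemma left_module_assoc: "a \<in> D \<Longrightarrow> b \<in> D \<Longrightarrow> x \<in> carrier S \<Longrightarrow> (a \<otimes> b) \<otimes> x = a \<otimes> (b \<otimes> x)"
  using free unfolding free_left_module_def by auto

lemma rank_pos: "0 < m"
proof (rule ccontr)
  assume "\<not> 0 < m"
  moreover have "\<exists>!c. c \<in> {..<m} \<rightarrow>\<^sub>E D \<and> \<one> = (\<Oplus>i\<in>{..<m}. c i \<otimes> T i)"
    using basis one_closed unfolding left_basis_def by blast
  ultimately have "\<one> = \<zero>" by auto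
  then show False by simp
qed

lemma monomial_assoc:
  assumes "a \<in> D" "b \<in> D" "c \<in> D" "i + j < m" "k < m"
  shows "((a \<otimes> T i) \<otimes> (b \<otimes> T j)) \<otimes> (c \<otimes> T k) = (a \<otimes> T i) \<otimes> ((b \<otimes> T j) \<otimes> (c \<otimes> T k))"
  using basis_assoc assms minus_eq_zero_imp_eq unfolding associator_def by auto

definition ev :: "(nat \<Rightarrow> 'a) \<Rightarrow> 'a" where
  "ev p = (\<Oplus>i\<in>{..<m}. p i \<otimes> T i)"

lemma ev_closed [intro, simp]: "(\<And>i. i < m \<Longrightarrow> p i \<in> D) \<Longrightarrow> ev p \<in> carrier S"
  unfolding ev_def by (intro finsum_closed) auto

lemma ev_restrict: "(\<And>i. i < m \<Longrightarrow> p i \<in> D) \<Longrightarrow> ev p = (\<Oplus>i\<in>{..<m}. restrict p {..<m} i \<otimes> T i)"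
  unfolding ev_def by (intro finsum_cong') auto

lemma ev_coeff_unique:
  assumes p: "\<And>i. i < m \<Longrightarrow> p i \<in> D" and q: "\<And>i. i < m \<Longrightarrow> q i \<in> D" and "ev p = ev q" "i < m"
  shows "p i = q i"
proof -
  obtain c where c: "\<And>c'. c' \<in> {..<m} \<rightarrow>\<^sub>E D \<and> ev p = (\<Oplus>i\<in>{..<m}. c' i \<otimes> T i) \<Longrightarrow> c' = c"
    using basis ev_closed[of p] p unfolding left_basis_def by metis
  have "restrict p {..<m} = c" using c[of "restrict p {..<m}"] p ev_restrict[of p] by auto
  moreover have "restrict q {..<m} = c" using c[of "restrict q {..<m}"] q ev_restrict[of q] assms(3) by auto
  ultimately show ?thesis using assms(4) by (metis lessThan_iff restrict_apply')
qed

lemma ev_surj: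
  assumes "x \<in> carrier S"
  obtains p where "\<And>i. p i \<in> D" "\<And>i. m \<le> i \<Longrightarrow> p i = \<zero>" "x = ev p"
proof -
  obtain c where c: "c \<in> {..<m} \<rightarrow>\<^sub>E D" "x = (\<Oplus>i\<in>{..<m}. c i \<otimes> T i)"
    using basis assms unfolding left_basis_def by metis
  define p where "p i = (if i < m then c i else \<zero>)" for i
  have "x = ev p" unfolding c(2) ev_def p_def using c by (intro finsum_cong') (auto simp: PiE_iff)
  moreover have "\<And>i. p i \<in> D" "\<And>i. m \<le> i \<Longrightarrow> p i = \<zero>" using c unfolding p_def by auto
  ultimately show thesis using that by blast
qed

lemma ev_monomial:
  assumes "k < m" "a \<in> D"
  shows "ev (\<lambda>i. if i = k then a else \<zero>) = a \<otimes> T k"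
proof -
  have "ev (\<lambda>i. if i = k then a else \<zero>) = (\<Oplus>i\<in>{..<m}. if i = k then a \<otimes> T k else \<zero>)"
    unfolding ev_def using assms by (intro finsum_cong') auto
  also have "\<dots> = a \<otimes> T k" using assms by (intro finsum_delta) auto
  finally show ?thesis .
qed

lemma monomial_coeff_inj: "k < m \<Longrightarrow> a \<in> D \<Longrightarrow> b \<in> D \<Longrightarrow> a \<otimes> T k = b \<otimes> T k \<Longrightarrow> a = b"
  using ev_coeff_unique[of "\<lambda>i. if i = k then a else \<zero>" "\<lambda>i. if i = k then b else \<zero>" k]
  by (simp add: ev_monomial)

lemma t_mult: "a \<in> D \<Longrightarrow> t \<otimes> a = \<sigma> a \<otimes> t"
  using t_commute sigma_map_zero by (cases "a = \<zero>") auto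

text \<open>\<sigma> is additive and multiplicative because t a = \<sigma>(a) t and the coefficients of a \<otimes> T 1 are
  unique; for m = 1 the map \<sigma> is the identity.\<close>

sublocale twisted_quotient S D \<sigma> m d
proof
  have T1: "T 1 = t" by simp
  have id: "\<sigma> a = a" if "m = 1" "a \<in> D" for a using sigma_period that by auto
  show "\<sigma> (a \<oplus> b) = \<sigma> a \<oplus> \<sigma> b" if ab: "a \<in> D" "b \<in> D" for a b
  proof (cases "m = 1")
    case False
    then have "1 < m" using rank_pos by linarith
    moreover have "\<sigma> (a \<oplus> b) \<otimes> T 1 = (\<sigma> a \<oplus> \<sigma> b) \<otimes> T 1"
      using ab sigma_maps by (simp add: t_mult[symmetric] r_distr l_distr)
    ultimately show ?thesis using monomial_coeff_inj ab sigma_maps by auto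
  qed (use id ab in auto)
  show "\<sigma> (a \<otimes> b) = \<sigma> a \<otimes> \<sigma> b" if ab: "a \<in> D" "b \<in> D" for a b
  proof (cases "m = 1")
    case False
    then have m2: "1 < m" using rank_pos by linarith
    have A: "((\<one> \<otimes> T 1) \<otimes> (a \<otimes> T 0)) \<otimes> (b \<otimes> T 0) = (\<one> \<otimes> T 1) \<otimes> ((a \<otimes> T 0) \<otimes> (b \<otimes> T 0))"
      and B: "((\<sigma> a \<otimes> T 0) \<otimes> (\<one> \<otimes> T 1)) \<otimes> (b \<otimes> T 0) = (\<sigma> a \<otimes> T 0) \<otimes> ((\<one> \<otimes> T 1) \<otimes> (b \<otimes> T 0))"
      using ab m2 sigma_maps by (intro monomial_assoc; simp)+
    have "\<sigma> (a \<otimes> b) \<otimes> T 1 = t \<otimes> (a \<otimes> b)" using t_mult ab by simp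
    also have "\<dots> = (t \<otimes> a) \<otimes> b" using A ab by simp
    also have "\<dots> = \<sigma> a \<otimes> (t \<otimes> b)" using B ab sigma_maps by (simp add: t_mult)
    also have "\<dots> = (\<sigma> a \<otimes> \<sigma> b) \<otimes> T 1" using left_module_assoc ab sigma_maps by (simp add: t_mult)
    finally show ?thesis using monomial_coeff_inj[OF m2] ab sigma_maps by auto
  qed (use id ab in auto)
qed (use sigma_maps t_commute rank_pos d_D sigma_period in auto)

end

context power_basis
begin

text \<open>Tred n is the element that represents t^n, n < 2m, in the basis: t^(n-m) t^m = \<sigma>^(n-m)(d) t^(n-m).\<close>

definition Tred :: "nat \<Rightarrow> 'a" where
  "Tred n = (if n < m then T n else (\<sigma> ^^ (n - m)) d \<otimes> T (n - m))"

lemma Tred_closed [intro, simp]: "Tred n \<in> carrier S"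
  unfolding Tred_def by auto

lemma T_mult_coeff: "i < m \<Longrightarrow> b \<in> D \<Longrightarrow> T i \<otimes> b = (\<sigma> ^^ i) b \<otimes> T i"
proof (induction i arbitrary: b)
  case (Suc i)
  have A: "((\<one> \<otimes> T 1) \<otimes> (\<one> \<otimes> T i)) \<otimes> (b \<otimes> T 0) = (\<one> \<otimes> T 1) \<otimes> ((\<one> \<otimes> T i) \<otimes> (b \<otimes> T 0))"
    and B: "((\<one> \<otimes> T 1) \<otimes> ((\<sigma> ^^ i) b \<otimes> T 0)) \<otimes> (\<one> \<otimes> T i)
      = (\<one> \<otimes> T 1) \<otimes> (((\<sigma> ^^ i) b \<otimes> T 0) \<otimes> (\<one> \<otimes> T i))"
    and C: "(((\<sigma> ^^ Suc i) b \<otimes> T 0) \<otimes> (\<one> \<otimes> T 1)) \<otimes> (\<one> \<otimes> T i)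
      = ((\<sigma> ^^ Suc i) b \<otimes> T 0) \<otimes> ((\<one> \<otimes> T 1) \<otimes> (\<one> \<otimes> T i))"
    using Suc by (intro monomial_assoc; simp)+
  have "T (Suc i) \<otimes> b = t \<otimes> (T i \<otimes> b)" using A Suc by simp
  also have "\<dots> = (t \<otimes> (\<sigma> ^^ i) b) \<otimes> T i" using B Suc by simp
  also have "\<dots> = (\<sigma> ^^ Suc i) b \<otimes> (t \<otimes> T i)" using C Suc by (simp add: t_mult)
  finally show ?case by simp
qed simp

lemma t_mult_Tred:
  assumes "1 < m" "Suc n < 2 * m"
  shows "t \<otimes> Tred n = Tred (Suc n)"
proof (cases "Suc n < m")
  case False
  show ?thesis
  proof (cases "Suc n = m")
    case True
    then have "t \<otimes> T n = d" using t_pow_m by (metis npow.simps(2))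
    then show ?thesis unfolding Tred_def using True by simp
  next
    case False2: False
    then have nm: "m \<le> n" "n - m < m" "Suc n - m = Suc (n - m)" using False assms by auto
    let ?e = "(\<sigma> ^^ (n - m)) d"
    have B: "((\<one> \<otimes> T 1) \<otimes> (?e \<otimes> T 0)) \<otimes> (\<one> \<otimes> T (n - m)) = (\<one> \<otimes> T 1) \<otimes> ((?e \<otimes> T 0) \<otimes> (\<one> \<otimes> T (n - m)))"
      and C: "((\<sigma> ?e \<otimes> T 0) \<otimes> (\<one> \<otimes> T 1)) \<otimes> (\<one> \<otimes> T (n - m)) = (\<sigma> ?e \<otimes> T 0) \<otimes> ((\<one> \<otimes> T 1) \<otimes> (\<one> \<otimes> T (n - m)))"
      using nm assms by (intro monomial_assoc; simp)+
    have "t \<otimes> Tred n = (t \<otimes> ?e) \<otimes> T (n - m)" unfolding Tred_def using nm B by simp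
    also have "\<dots> = \<sigma> ?e \<otimes> (t \<otimes> T (n - m))" using C by (simp add: t_mult)
    also have "\<dots> = Tred (Suc n)" unfolding Tred_def using nm False by simp
    finally show ?thesis .
  qed
qed (simp add: Tred_def)

lemma T_mult_T: "i < m \<Longrightarrow> j < m \<Longrightarrow> T i \<otimes> T j = Tred (i + j)"
proof (induction i)
  case (Suc i)
  have "((\<one> \<otimes> T 1) \<otimes> (\<one> \<otimes> T i)) \<otimes> (\<one> \<otimes> T j) = (\<one> \<otimes> T 1) \<otimes> ((\<one> \<otimes> T i) \<otimes> (\<one> \<otimes> T j))"
    using Suc by (intro monomial_assoc) auto
  then have "T (Suc i) \<otimes> T j = t \<otimes> Tred (i + j)" using Suc by simp
  also have "\<dots> = Tred (Suc (i + j))" using Suc by (intro t_mult_Tred) auto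
  finally show ?case by simp
qed (simp add: Tred_def)

lemma monomial_mult_Tred:
  assumes "a \<in> D" "b \<in> D" "i < m" "j < m"
  shows "(a \<otimes> T i) \<otimes> (b \<otimes> T j) = (a \<otimes> (\<sigma> ^^ i) b) \<otimes> Tred (i + j)"
proof -
  let ?b = "(\<sigma> ^^ i) b"
  have A: "((a \<otimes> T 0) \<otimes> (\<one> \<otimes> T i)) \<otimes> (b \<otimes> T j) = (a \<otimes> T 0) \<otimes> ((\<one> \<otimes> T i) \<otimes> (b \<otimes> T j))"
    and B: "((\<one> \<otimes> T i) \<otimes> (b \<otimes> T 0)) \<otimes> (\<one> \<otimes> T j) = (\<one> \<otimes> T i) \<otimes> ((b \<otimes> T 0) \<otimes> (\<one> \<otimes> T j))"
    and C: "((?b \<otimes> T 0) \<otimes> (\<one> \<otimes> T i)) \<otimes> (\<one> \<otimes> T j) = (?b \<otimes> T 0) \<otimes> ((\<one> \<otimes> T i) \<otimes> (\<one> \<otimes> T j))"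
    using assms by (intro monomial_assoc; simp)+
  have "(a \<otimes> T i) \<otimes> (b \<otimes> T j) = a \<otimes> ((T i \<otimes> b) \<otimes> T j)" using A B assms by simp
  also have "\<dots> = a \<otimes> (?b \<otimes> (T i \<otimes> T j))" using C assms by (simp add: T_mult_coeff)
  also have "\<dots> = (a \<otimes> ?b) \<otimes> Tred (i + j)" using assms by (simp add: left_module_assoc T_mult_T)
  finally show ?thesis .
qed

lemma monomial_mult:
  assumes "a \<in> D" "b \<in> D" "i < m" "j < m"
  shows "(a \<otimes> T i) \<otimes> (b \<otimes> T j) =
    (if i + j < m then (a \<otimes> (\<sigma> ^^ i) b) \<otimes> T (i + j)
     else ((a \<otimes> (\<sigma> ^^ i) b) \<otimes> (\<sigma> ^^ (i + j - m)) d) \<otimes> T (i + j - m))"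
  using monomial_mult_Tred[OF assms] left_module_assoc assms unfolding Tred_def by auto

end

context power_basis
begin

lemma ev_add:
  assumes "\<And>i. p i \<in> D" "\<And>i. q i \<in> D"
  shows "ev (tp_add S p q) = ev p \<oplus> ev q"
proof -
  have "ev (tp_add S p q) = (\<Oplus>i\<in>{..<m}. p i \<otimes> T i \<oplus> q i \<otimes> T i)"
    unfolding ev_def tp_add_def using assms by (intro finsum_cong') (auto simp: l_distr)
  also have "\<dots> = ev p \<oplus> ev q" unfolding ev_def using assms by (intro finsum_addf) auto
  finally show ?thesis .
qed

lemma ev_one: "ev (tp_one S) = \<one>"
  unfolding tp_one_def using ev_monomial[of 0 \<one>] rank_pos by simp

lemma ev_zero: "ev (\<lambda>i. \<zero>) = \<zero>"
  unfolding ev_def by (simp add: finsum_zero)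

text \<open>The coefficient of t^n contributed by the product of the monomials of degree i and j.\<close>

definition prod_coeff :: "(nat \<Rightarrow> 'a) \<Rightarrow> (nat \<Rightarrow> 'a) \<Rightarrow> nat \<Rightarrow> nat \<Rightarrow> nat \<Rightarrow> 'a" where
  "prod_coeff p q i j n = (if i + j = n then p i \<otimes> (\<sigma> ^^ i) (q j) else \<zero>) \<oplus>
     (if i + j = n + m then (p i \<otimes> (\<sigma> ^^ i) (q j)) \<otimes> (\<sigma> ^^ n) d else \<zero>)"

lemma prod_coeff_D [intro, simp]:
  "(\<And>i. p i \<in> D) \<Longrightarrow> (\<And>i. q i \<in> D) \<Longrightarrow> prod_coeff p q i j n \<in> D"
  unfolding prod_coeff_def by auto

lemma monomial_mult_expand:
  assumes p: "\<And>i. p i \<in> D" and q: "\<And>i. q i \<in> D" and ij: "i < m" "j < m"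
  shows "(p i \<otimes> T i) \<otimes> (q j \<otimes> T j) = (\<Oplus>n\<in>{..<m}. prod_coeff p q i j n \<otimes> T n)"
proof -
  define k where "k = (if i + j < m then i + j else i + j - m)"
  define Y where "Y = (if i + j < m then p i \<otimes> (\<sigma> ^^ i) (q j)
    else (p i \<otimes> (\<sigma> ^^ i) (q j)) \<otimes> (\<sigma> ^^ (i + j - m)) d)"
  have k: "k < m" and Y: "Y \<in> D" using ij p q unfolding k_def Y_def by auto
  have "(\<Oplus>n\<in>{..<m}. prod_coeff p q i j n \<otimes> T n) = (\<Oplus>n\<in>{..<m}. if n = k then Y \<otimes> T k else \<zero>)"
    unfolding prod_coeff_def k_def Y_def using p q ij by (intro finsum_cong') auto
  also have "\<dots> = Y \<otimes> T k" using k Y by (intro finsum_delta) auto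
  finally show ?thesis using monomial_mult[OF p q ij] unfolding k_def Y_def by presburger
qed

lemma prod_coeff_sum_j:
  assumes p: "\<And>i. p i \<in> D" and q: "\<And>i. q i \<in> D" and n: "n < m" and i: "i < m"
  shows "(\<Oplus>j\<in>{..<m}. prod_coeff p q i j n) =
     (if i \<le> n then p i \<otimes> (\<sigma> ^^ i) (q (n - i)) else \<zero>) \<oplus>
     (if n < i then (p i \<otimes> (\<sigma> ^^ i) (q (n + m - i))) \<otimes> (\<sigma> ^^ n) d else \<zero>)"
proof -
  let ?A = "if i \<le> n then p i \<otimes> (\<sigma> ^^ i) (q (n - i)) else \<zero>"
  let ?B = "if n < i then (p i \<otimes> (\<sigma> ^^ i) (q (n + m - i))) \<otimes> (\<sigma> ^^ n) d else \<zero>"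
  have "(\<Oplus>j\<in>{..<m}. prod_coeff p q i j n)
      = (\<Oplus>j\<in>{..<m}. (if j = n - i then ?A else \<zero>) \<oplus> (if j = n + m - i then ?B else \<zero>))"
    unfolding prod_coeff_def using p q n i by (intro finsum_cong') auto
  also have "\<dots> = (\<Oplus>j\<in>{..<m}. if j = n - i then ?A else \<zero>) \<oplus> (\<Oplus>j\<in>{..<m}. if j = n + m - i then ?B else \<zero>)"
    using p q by (intro finsum_addf) auto
  also have "(\<Oplus>j\<in>{..<m}. if j = n - i then ?A else \<zero>) = ?A"
    using p q n by (intro finsum_delta) auto
  also have "(\<Oplus>j\<in>{..<m}. if j = n + m - i then ?B else \<zero>) = ?B"
    using p q n i by (cases "n < i") (auto simp: finsum_delta finsum_zero)
  finally show ?thesis .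
qed

lemma prod_coeff_sum:
  assumes p: "p \<in> sf_carrier S D m" and q: "q \<in> sf_carrier S D m" and n: "n < m"
  shows "(\<Oplus>i\<in>{..<m}. \<Oplus>j\<in>{..<m}. prod_coeff p q i j n) = reduce (tp_mult S \<sigma> p q) n"
proof -
  have pD: "\<And>i. p i \<in> D" and qD: "\<And>i. q i \<in> D" using p q sf_D by auto
  let ?P = "\<lambda>i. p i \<otimes> (\<sigma> ^^ i) (q (n - i))"
  let ?Q = "\<lambda>i. (p i \<otimes> (\<sigma> ^^ i) (q (n + m - i))) \<otimes> (\<sigma> ^^ n) d"
  have "(\<Oplus>i\<in>{..<m}. \<Oplus>j\<in>{..<m}. prod_coeff p q i j n) =
      (\<Oplus>i\<in>{..<m}. (if i \<le> n then ?P i else \<zero>) \<oplus> (if n < i then ?Q i else \<zero>))"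
    using prod_coeff_sum_j[OF pD qD n] pD qD by (intro finsum_cong') auto
  also have "\<dots> = (\<Oplus>i\<in>{..<m}. if i \<le> n then ?P i else \<zero>) \<oplus> (\<Oplus>i\<in>{..<m}. if n < i then ?Q i else \<zero>)"
    using pD qD by (intro finsum_addf) auto
  also have "(\<Oplus>i\<in>{..<m}. if i \<le> n then ?P i else \<zero>) = tp_mult S \<sigma> p q n"
    unfolding tp_mult_def by (rule add.finprod_mono_neutral_cong_right) (use n pD qD in auto)
  also have "(\<Oplus>i\<in>{..<m}. if n < i then ?Q i else \<zero>) = (\<Oplus>i\<in>{..n + m}. ?Q i)"
  proof (rule add.finprod_mono_neutral_cong)
    show "\<And>i. i \<in> {..n + m} - {..<m} \<Longrightarrow> ?Q i = \<zero>" using sf_zero[OF p] qD by auto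
    show "\<And>i. i \<in> {..<m} \<inter> {..n + m} \<Longrightarrow> (if n < i then ?Q i else \<zero>) = ?Q i"
      using sf_zero[OF q] pD by auto
  qed (use pD qD in auto)
  also have "\<dots> = tp_mult S \<sigma> p q (n + m) \<otimes> (\<sigma> ^^ n) d"
    unfolding tp_mult_def using pD qD by (subst finsum_rdistr) auto
  finally show ?thesis unfolding reduce_def using n by simp
qed

lemma ev_mult:
  assumes p: "p \<in> sf_carrier S D m" and q: "q \<in> sf_carrier S D m"
  shows "ev (p \<otimes>\<^bsub>SF\<^esub> q) = ev p \<otimes> ev q"
proof -
  have pD: "\<And>i. p i \<in> D" and qD: "\<And>i. q i \<in> D" using p q sf_D by auto
  let ?c = "prod_coeff p q"
  have "ev p \<otimes> ev q = (\<Oplus>i\<in>{..<m}. \<Oplus>j\<in>{..<m}. (p i \<otimes> T i) \<otimes> (q j \<otimes> T j))"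
    unfolding ev_def using pD qD
    by (subst finsum_rdistr) (auto simp: finsum_ldistr intro!: finsum_cong' finsum_closed)
  also have "\<dots> = (\<Oplus>i\<in>{..<m}. \<Oplus>j\<in>{..<m}. \<Oplus>n\<in>{..<m}. ?c i j n \<otimes> T n)"
    using pD qD monomial_mult_expand[OF pD qD]
    by (intro finsum_cong') (auto intro!: finsum_cong' finsum_closed)
  also have "\<dots> = (\<Oplus>n\<in>{..<m}. \<Oplus>i\<in>{..<m}. \<Oplus>j\<in>{..<m}. ?c i j n \<otimes> T n)"
    using pD qD by (subst finsum_swap) (auto intro!: finsum_cong' finsum_swap finsum_closed)
  also have "\<dots> = (\<Oplus>n\<in>{..<m}. (\<Oplus>i\<in>{..<m}. \<Oplus>j\<in>{..<m}. ?c i j n) \<otimes> T n)"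
    using pD qD by (intro finsum_cong') (auto simp: finsum_rdistr Pi_def intro!: finsum_cong' finsum_closed)
  also have "\<dots> = ev (p \<otimes>\<^bsub>SF\<^esub> q)"
    unfolding ev_def Sf_mult[OF p q] using prod_coeff_sum[OF p q] pD qD
    by (intro finsum_cong') (auto simp: reduce_def)
  finally show ?thesis by simp
qed

lemma ev_bij: "bij_betw ev (sf_carrier S D m) (carrier S)"
proof -
  have "inj_on ev (sf_carrier S D m)"
  proof
    fix p q assume p: "p \<in> sf_carrier S D m" and q: "q \<in> sf_carrier S D m" and e: "ev p = ev q"
    show "p = q"
    proof
      fix i show "p i = q i"
        using ev_coeff_unique[OF _ _ e, of i] p q sf_D sf_zero[OF p, of i] sf_zero[OF q, of i]
        by (cases "i < m") auto
    qed
  qed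
  moreover have "ev ` sf_carrier S D m = carrier S"
  proof
    show "carrier S \<subseteq> ev ` sf_carrier S D m"
    proof
      fix x assume x: "x \<in> carrier S"
      obtain p where "\<And>i. p i \<in> D" "\<And>i. m \<le> i \<Longrightarrow> p i = \<zero>" "x = ev p"
        using ev_surj[OF x] by blast
      then show "x \<in> ev ` sf_carrier S D m" by (blast intro: sf_carrierI)
    qed
  qed (use sf_D in auto)
  ultimately show ?thesis unfolding bij_betw_def by auto
qed

lemma ev_iso: "na_iso SF S ev"
  unfolding na_iso_def using ev_bij ev_one ev_add sf_D ev_mult by simp

definition coeffs :: "'a \<Rightarrow> nat \<Rightarrow> 'a" where
  "coeffs = inv_into (sf_carrier S D m) ev"

lemma coeffs_iso: "na_iso S SF coeffs"
  unfolding coeffs_def using na_iso_inv[OF ev_iso] by simp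

lemma coeffs_sf [intro, simp]: "x \<in> carrier S \<Longrightarrow> coeffs x \<in> sf_carrier S D m"
  and ev_coeffs [simp]: "x \<in> carrier S \<Longrightarrow> ev (coeffs x) = x"
  and coeffs_ev [simp]: "p \<in> sf_carrier S D m \<Longrightarrow> coeffs (ev p) = p"
  unfolding coeffs_def using ev_bij by (auto simp: bij_betw_def inv_into_into f_inv_into_f)

end

context power_basis
begin

lemma ev_const: "c \<in> D \<Longrightarrow> ev (tp_const c) = c"
  unfolding tp_const_def using ev_monomial[of 0 c] rank_pos by simp

lemma coeffs_const: "c \<in> D \<Longrightarrow> coeffs c = tp_const c"
  using coeffs_ev[OF tp_const_sf] ev_const by metis

lemma f_irreducible:
  assumes "right_division_ring S"
  shows "tp_irreducible S D \<sigma> f"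
proof (rule ccontr)
  assume "\<not> tp_irreducible S D \<sigma> f"
  then obtain g h where g: "g \<in> sf_carrier S D m" and h: "h \<in> sf_carrier S D m"
    and nz: "g \<noteq> (\<lambda>i. \<zero>)" "h \<noteq> (\<lambda>i. \<zero>)" and gh: "g \<otimes>\<^bsub>SF\<^esub> h = (\<lambda>i. \<zero>)"
    by (rule reducible_imp_zero_divisors)
  have ev_nz: "ev p \<noteq> \<zero>" if "p \<in> sf_carrier S D m" "p \<noteq> (\<lambda>i. \<zero>)" for p
    using that ev_bij ev_zero zero_sf by (metis bij_betw_def inj_on_def)
  have "ev g \<otimes> ev h = \<zero>" using ev_mult[OF g h] gh ev_zero by simp
  moreover have "ev g \<noteq> \<zero>" "ev h \<noteq> \<zero>" using ev_nz g h nz by auto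
  moreover have "ev g \<in> carrier S" "ev h \<in> carrier S" using g h sf_D by auto
  ultimately show False using right_division_ring_no_zero_divisors[OF assms] by blast
qed

lemma center_assoc:
  assumes x: "x \<in> carrier S" and y: "y \<in> carrier S" and c: "c \<in> F"
  shows "(x \<otimes> y) \<otimes> c = x \<otimes> (y \<otimes> c)"
proof -
  have cD: "c \<in> D" using c by auto
  have "(x \<otimes> y) \<otimes> c = ev ((coeffs x \<otimes>\<^bsub>SF\<^esub> coeffs y) \<otimes>\<^bsub>SF\<^esub> tp_const c)"
    using x y cD by (simp add: ev_mult ev_const)
  also have "\<dots> = ev (coeffs x \<otimes>\<^bsub>SF\<^esub> (coeffs y \<otimes>\<^bsub>SF\<^esub> tp_const c))"
    using x y c by (simp add: Sf_assoc_center)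
  also have "\<dots> = x \<otimes> (y \<otimes> c)"
    using x y cD by (simp add: ev_mult ev_const)
  finally show ?thesis .
qed

lemma right_vector_space_center: "right_vector_space S F"
proof
  show "F \<subseteq> carrier S" by auto
  show "\<exists>b\<in>F. a \<otimes> b = \<one>" if "a \<in> F" "a \<noteq> \<zero>" for a using F_inv that by blast
  show "(x \<otimes> a) \<otimes> b = x \<otimes> (a \<otimes> b)" if "x \<in> carrier S" "a \<in> F" "b \<in> F" for x a b
    using center_assoc that by auto
qed auto

text \<open>This is why S is spanned over F by the elements b t^i with b in a basis of D over F.\<close>

lemma center_coeff_right:
  assumes b: "b \<in> D" and c: "c \<in> F" and i: "i < m"
  shows "(c \<otimes> b) \<otimes> T i = (b \<otimes> T i) \<otimes> (\<sigma> ^^ (m - i)) c"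
proof -
  let ?c = "(\<sigma> ^^ (m - i)) c"
  have cD: "c \<in> D" "?c \<in> D" using c by auto
  have "(\<sigma> ^^ i) ?c = c" using sigma_pow_pow[of i "m - i" c] sigma_order cD i by simp
  then have "(b \<otimes> T i) \<otimes> (?c \<otimes> T 0) = (b \<otimes> c) \<otimes> T i"
    using monomial_mult[OF b cD(2) i rank_pos] i by simp
  then show ?thesis using F_comm[OF c b] cD by simp
qed

lemma finite_span_center:
  assumes "central_simple S D"
  obtains J :: "(nat \<times> 'a) set" and v where "finite J" "v \<in> J \<rightarrow> carrier S"
    "carrier S \<subseteq> right_vector_space.span S F J v"
proof -
  interpret right_vector_space S F by (rule right_vector_space_center)
  obtain B where B: "finite B" "B \<subseteq> D"
    and B_span: "\<And>x. x \<in> D \<Longrightarrow> \<exists>c. (\<forall>b\<in>B. c b \<in> F) \<and> x = (\<Oplus>b\<in>B. c b \<otimes> b)"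
    using assms unfolding central_simple_def by metis
  define J where "J = {..<m} \<times> B"
  define v where "v = (\<lambda>(i, b). b \<otimes> T i)"
  have J: "finite J" unfolding J_def using B by auto
  have v: "v \<in> J \<rightarrow> carrier S" unfolding J_def v_def using B by auto
  have monomial_span: "p \<otimes> T i \<in> span J v" if p: "p \<in> D" and i: "i < m" for p i
  proof -
    obtain c where c: "\<forall>b\<in>B. c b \<in> F" "p = (\<Oplus>b\<in>B. c b \<otimes> b)" using B_span p by blast
    have "p \<otimes> T i = (\<Oplus>b\<in>B. (c b \<otimes> b) \<otimes> T i)"
      unfolding c(2) using c B by (subst finsum_rdistr) auto
    also have "\<dots> = (\<Oplus>b\<in>B. v (i, b) \<otimes> (\<sigma> ^^ (m - i)) (c b))"
      using center_coeff_right c B i by (intro finsum_cong') (auto simp: v_def)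
    also have "\<dots> \<in> span J v"
      using c B i by (intro span_finsum[OF v] funcsetI span_generator[OF v]) (auto simp: J_def J)
    finally show ?thesis .
  qed
  have "x \<in> span J v" if x: "x \<in> carrier S" for x
  proof -
    obtain p where "\<And>i. p i \<in> D" "x = ev p" using ev_surj[OF x] by blast
    then show ?thesis unfolding ev_def using monomial_span by (auto intro!: span_finsum[OF v])
  qed
  then show thesis using that J v by blast
qed

lemma left_mult_bij:
  assumes rdiv: "right_division_ring S" and csa: "central_simple S D"
    and a: "a \<in> carrier S" "a \<noteq> \<zero>"
  shows "bij_betw (\<lambda>x. a \<otimes> x) (carrier S) (carrier S)"
proof -
  interpret right_vector_space S F by (rule right_vector_space_center)
  obtain J :: "(nat \<times> 'a) set" and v where J: "finite J" "v \<in> J \<rightarrow> carrier S" "carrier S \<subseteq> span J v"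
    by (rule finite_span_center[OF csa])
  have lin: "linear_endo (\<lambda>x. a \<otimes> x)"
    unfolding linear_endo_def using a by (auto simp: r_distr center_assoc)
  have "inj_on (\<lambda>x. a \<otimes> x) (carrier S)"
  proof (rule inj_onI)
    fix x y assume x: "x \<in> carrier S" and y: "y \<in> carrier S" and "a \<otimes> x = a \<otimes> y"
    then have "a \<otimes> (x \<ominus> y) = \<zero>" using x y a by (simp add: a_minus_def r_distr r_minus r_neg)
    then have "x \<ominus> y = \<zero>"
      using right_division_ring_no_zero_divisors[OF rdiv a(1), of "x \<ominus> y"] a(2) x y by auto
    then show "x = y" using minus_eq_zero_imp_eq x y by blast
  qed
  then show ?thesis
    using injective_linear_endo_surj[OF J lin] unfolding bij_betw_def by simp
qed

end

locale power_basis_root = power_basis + twisted_quotient_root S D \<sigma> m d \<omega> for \<omega>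
begin

definition aut :: "nat \<Rightarrow> 'a \<Rightarrow> 'a" where
  "aut k = restrict (\<lambda>x. ev (root_twist k (coeffs x))) (carrier S)"

lemma aut_iso: "na_iso S S (aut k)"
proof -
  have "na_iso S S (ev \<circ> (root_twist k \<circ> coeffs))"
    using na_iso_comp[OF na_iso_comp[OF coeffs_iso root_twist_iso] ev_iso] .
  then show ?thesis by (rule na_iso_cong) (auto simp: aut_def)
qed

lemma aut_fixes_D: "a \<in> D \<Longrightarrow> aut k a = a"
  unfolding aut_def by (simp add: coeffs_const root_twist_const ev_const)

lemma aut_pow: "x \<in> carrier S \<Longrightarrow> (aut 1 ^^ k) x = ev (root_twist k (coeffs x))"
proof (induction k)
  case (Suc k)
  have twist: "root_twist k (coeffs x) \<in> sf_carrier S D m" using Suc.prems by simp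
  have "(aut 1 ^^ Suc k) x = aut 1 (ev (root_twist k (coeffs x)))" using Suc by simp
  also have "\<dots> = ev (root_twist 1 (root_twist k (coeffs x)))" unfolding aut_def using twist sf_D by simp
  also have "\<dots> = ev (root_twist (Suc k) (coeffs x))" using root_twist_root_twist Suc.prems by simp
  finally show ?case .
qed (simp add: root_twist_0)

lemma aut_pow_restrict: "restrict (aut 1 ^^ k) (carrier S) = aut (k mod m)"
  using aut_pow root_twist_mod[of k] unfolding aut_def by auto

lemma aut_mod: "aut k = aut (k mod m)"
  unfolding aut_def using root_twist_mod by metis

lemma aut_inj: "inj_on aut {..<m}"
proof
  fix k l assume k: "k \<in> {..<m}" and l: "l \<in> {..<m}" and eq: "aut k = aut l"
  show "k = l"
  proof (cases "1 < m")
    case True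
    let ?e = "\<lambda>i. if i = 1 then \<one> else \<zero>"
    have e: "?e \<in> sf_carrier S D m" by (rule sf_carrierI) (use True in auto)
    have "ev ?e = T 1" using ev_monomial[OF True, of \<one>] by simp
    then have "coeffs (T 1) = ?e" using coeffs_ev[OF e] by simp
    then have "aut j (T 1) = W j \<otimes> T 1" for j
      unfolding aut_def using root_twist_monomial ev_monomial[OF True] by simp
    then have "W k \<otimes> T 1 = W l \<otimes> T 1" using eq by metis
    then have "W k = W l" using monomial_coeff_inj[OF True] by (meson F_D W_center)
    then show ?thesis using W_inj k l by auto
  qed (use k l in auto)
qed

lemma cyclic_aut_group:
  "\<exists>G. G \<subseteq> na_aut S \<and> finite G \<and> card G = m \<and>
     (\<exists>g\<in>G. G = {restrict (g ^^ k) (carrier S) | k. True}) \<and> (\<forall>H\<in>G. \<forall>a\<in>D. H a = a)"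
proof (intro exI conjI)
  let ?G = "aut ` {..<m}"
  show "?G \<subseteq> na_aut S" unfolding na_aut_def using aut_iso by (auto simp: aut_def)
  show "finite ?G" by simp
  show "card ?G = m" using card_image[OF aut_inj] by simp
  show "\<forall>H\<in>?G. \<forall>a\<in>D. H a = a" using aut_fixes_D by auto
  have "aut 1 \<in> ?G" using aut_mod[of 1] rank_pos by (metis image_eqI lessThan_iff mod_less_divisor)
  moreover have "?G = {restrict (aut 1 ^^ k) (carrier S) | k. True}"
  proof
    show "?G \<subseteq> {restrict (aut 1 ^^ k) (carrier S) | k. True}"
    proof
      fix H assume "H \<in> ?G"
      then obtain k where "k < m" "H = aut k" by auto
      then have "H = restrict (aut 1 ^^ k) (carrier S)" using aut_pow_restrict[of k] by simp
      then show "H \<in> {restrict (aut 1 ^^ k) (carrier S) | k. True}" by blast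
    qed
    show "{restrict (aut 1 ^^ k) (carrier S) | k. True} \<subseteq> ?G"
      using aut_pow_restrict rank_pos by auto
  qed
  ultimately show "\<exists>g\<in>?G. ?G = {restrict (g ^^ k) (carrier S) | k. True}" by blast
qed

end

theorem theorem4p3:
  fixes S :: "'a ring" and D :: "'a set" and m :: nat and t d \<omega> :: 'a
    and \<sigma> :: "'a \<Rightarrow> 'a"
  assumes ring: "nonassoc_ring S"
    and subring: "assoc_division_subring S D"
    and free: "free_left_module S D m"
    and t_in: "t \<in> carrier S"
    and h1: "left_basis S D (npow S t) m"
    and h2: "\<forall>a\<in>D. a \<noteq> \<zero>\<^bsub>S\<^esub> \<longrightarrow> (\<exists>a'\<in>D. a' \<noteq> \<zero>\<^bsub>S\<^esub> \<and> t \<otimes>\<^bsub>S\<^esub> a = a' \<otimes>\<^bsub>S\<^esub> t)"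
    and h3: "\<forall>a\<in>D. \<forall>b\<in>D. \<forall>c\<in>D. \<forall>i j k. i + j < m \<and> k < m \<longrightarrow>
               associator S (a \<otimes>\<^bsub>S\<^esub> npow S t i) (b \<otimes>\<^bsub>S\<^esub> npow S t j) (c \<otimes>\<^bsub>S\<^esub> npow S t k)
                 = \<zero>\<^bsub>S\<^esub>"
    and h4: "d \<in> D" "npow S t m = d"
    and sigma_map: "\<forall>a\<in>D. \<sigma> a \<in> D" "\<sigma> \<zero>\<^bsub>S\<^esub> = \<zero>\<^bsub>S\<^esub>"
    and sigma_def: "\<forall>a\<in>D. a \<noteq> \<zero>\<^bsub>S\<^esub> \<longrightarrow> \<sigma> a \<noteq> \<zero>\<^bsub>S\<^esub> \<and> t \<otimes>\<^bsub>S\<^esub> a = \<sigma> a \<otimes>\<^bsub>S\<^esub> t"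
    and sigma_order: "\<forall>a\<in>D. (\<sigma> ^^ m) a = a"
      "\<forall>k. 0 < k \<and> k < m \<longrightarrow> \<not> (\<forall>a\<in>D. (\<sigma> ^^ k) a = a)"
    and sigma_fix: "{a \<in> D. \<sigma> a = a} = {a \<in> D. t \<otimes>\<^bsub>S\<^esub> a = a \<otimes>\<^bsub>S\<^esub> t}"
    and csa: "central_simple S D"
    and omega: "\<omega> \<in> center_of S D" "\<sigma> \<omega> = \<omega>"
      "npow S \<omega> m = \<one>\<^bsub>S\<^esub>" "\<forall>k. 0 < k \<and> k < m \<longrightarrow> npow S \<omega> k \<noteq> \<one>\<^bsub>S\<^esub>"
  shows "(\<exists>\<phi>. na_iso S (Sf S D \<sigma> d m) \<phi>) \<and>
         (right_division_ring S \<longrightarrow>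
            tp_irreducible S D \<sigma> (tp_f S m d) \<and> nonassoc_cyclic_ext S D m)"
proof -
  \<comment> \<open>h2 is implied by sigma_def.\<close>
  interpret power_basis S D \<sigma> m d t
    by unfold_locales (use ring subring free t_in h1 h3 h4 sigma_map sigma_def sigma_order in auto)
  have "tp_irreducible S D \<sigma> (tp_f S m d) \<and> nonassoc_cyclic_ext S D m"
    if rdiv: "right_division_ring S"
  proof -
    interpret power_basis_root S D \<sigma> m d t \<omega>
      by unfold_locales (use omega in auto)
    have "nonassoc_division_ring S"
      using ring rdiv left_mult_bij[OF rdiv csa]
      unfolding nonassoc_division_ring_def right_division_ring_def by auto
    then show ?thesis
      using f_irreducible[OF rdiv] cyclic_aut_group subring free
      unfolding nonassoc_cyclic_ext_def by auto
  qed
  then show ?thesis using coeffs_iso by blast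
qed

end
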